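(* Let $K,L\in\mathcal{K}_+^2$ be convex bodies in $\mathbb{R}^2$. Then $$\frac12\int_{\partial L}\frac{1}{\kappa_{L,K}}\,d\mu_{\partial L;K}-V(L)\geq\lambda_2(-L_K)\Big(\frac{V(K,L)^2}{V(K)}-V(L)\Big).$$ When $K=B$ is the unit disc, this reduces to $$\frac12\int_{\partial L}\frac1{\kappa_L}\,d\mu_{\partial L}-V(L)\geq4\Big(\frac{|\partial L|^2}{4\pi}-V(L)\Big).$$
   Context: Here $n=2$. $\mathcal{K}_+^2$ is the class of convex bodies in $\mathbb{R}^2$ containing the origin in their interior with $C^2$ boundary and positive curvature, and $h_K$ is the support function on $\mathbb{S}^1$. $V(L)$ is area, $V(K,L)$ is the mixed area, and $|\partial L|$ is the perimeter. Curvatures and measures on $\partial L$: - $\nu:\partial L\to\mathbb{S}^1$ is the Gauss map of $L$, $\kappa_L$ the curvature of $\partial L$, and $d\mu_{\partial L}$ the arc-length measure. - For $X\in\partial L$, $\kappa_{L,K}(X)=\kappa_L(X)/\kappa_K(Y)$, where $Y\in\partial K$ is the point of $\partial K$ with outer normal $\nu(X)$. Equivalently, $\kappa_{L,K}$ is the eigenvalue of the anisotropic Weingarten map $d\nu_\gamma$, with $\nu_\gamma=h_K(\nu)\nu+\nabla h_K(\nu)$. - $d\mu_{\partial L;K}=h_K(\nu)\,d\mu_{\partial L}$. Notation on $\mathbb{S}^1$: - $D^2h=h''+h$ and $dV_K=\frac12h_KD^2h_K\,d\mu$. - $L_Kz=(D^2h_K)^{-1}D^2(zh_K)-z$ and $\ell_v^K(x)=\langle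 x,v\rangle/h_K(x)$. - $\lambda_2(-L_K)$ is the infimum of $\int z(-L_Kz)dV_K/\int z^2dV_K$ over nonzero $z\in C^2(\mathbb{S}^1)$ with $\int z\,dV_K=0$ and $\int z\ell_v^KdV_K=0$ for all $v\in\mathbb{R}^2$. *)

theory Defs
  imports "HOL-Analysis.Analysis"
begin

definition dir :: "real \<Rightarrow> real^2" where
  "dir t = vector [cos t, sin t]"

definition supp :: "(real^2) set \<Rightarrow> real \<Rightarrow> real" where
  "supp K t = Sup ((\<lambda>x. x \<bullet> dir t) ` K)"

definition C2_circle :: "(real \<Rightarrow> real) \<Rightarrow> bool" where
  "C2_circle f \<longleftrightarrow> (\<forall>t. f (t + 2*pi) = f t) \<and> (\<forall>t. f differentiable at t)
     \<and> (\<forall>t. deriv f differentiable at t) \<and> continuous_on UNIV (deriv (deriv f))"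

definition D2 :: "(real \<Rightarrow> real) \<Rightarrow> real \<Rightarrow> real" where
  "D2 f t = deriv (deriv f) t + f t"

text \<open>The class K_+^2: convex bodies containing the origin in the interior, with C^2
  boundary of positive curvature (equivalently: C^2 support function with h''+h > 0).\<close>
definition Kplus2 :: "(real^2) set \<Rightarrow> bool" where
  "Kplus2 K \<longleftrightarrow> compact K \<and> convex K \<and> 0 \<in> interior K
     \<and> C2_circle (supp K) \<and> (\<forall>t. D2 (supp K) t > 0)"

definition area :: "(real^2) set \<Rightarrow> real" where
  "area K = measure lebesgue K"

text \<open>Mixed area, via V(K+L) = V(K) + 2 V(K,L) + V(L).\<close>
definition mixed_area :: "(real^2) set \<Rightarrow> (real^2) set \<Rightarrow> real" where
  "mixed_area K L = (area {x + y | x y. x \<in> K \<and> y \<in> L} - area K - area L) / 2"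

text \<open>Integration over the boundary of L with respect to arc length, of a quantity
  expressed through the outer normal angle t of the boundary point (Gauss map
  parametrisation: d mu = (h_L''+h_L) dt).\<close>
definition bd_integral :: "(real^2) set \<Rightarrow> (real \<Rightarrow> real) \<Rightarrow> real" where
  "bd_integral L g = integral {0..2*pi} (\<lambda>t. g t * D2 (supp L) t)"

text \<open>Curvature of the boundary of L at the point with outer normal dir t.\<close>
definition curv :: "(real^2) set \<Rightarrow> real \<Rightarrow> real" where
  "curv L t = 1 / D2 (supp L) t"

definition rel_curv :: "(real^2) set \<Rightarrow> (real^2) set \<Rightarrow> real \<Rightarrow> real" where
  "rel_curv L K t = curv L t / curv K t"

definition perimeter :: "(real^2) set \<Rightarrow> real" where
  "perimeter L = bd_integral L (\<lambda>_. 1)"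

definition dV_integral :: "(real^2) set \<Rightarrow> (real \<Rightarrow> real) \<Rightarrow> real" where
  "dV_integral K g = integral {0..2*pi} (\<lambda>t. g t * ((1/2) * supp K t * D2 (supp K) t))"

definition L_op :: "(real^2) set \<Rightarrow> (real \<Rightarrow> real) \<Rightarrow> real \<Rightarrow> real" where
  "L_op K z t = D2 (\<lambda>s. z s * supp K s) t / D2 (supp K) t - z t"

definition ell :: "(real^2) set \<Rightarrow> real^2 \<Rightarrow> real \<Rightarrow> real" where
  "ell K v t = (dir t \<bullet> v) / supp K t"

definition lambda2 :: "(real^2) set \<Rightarrow> real" where
  "lambda2 K = Inf { dV_integral K (\<lambda>t. z t * (- L_op K z t)) / dV_integral K (\<lambda>t. (z t)^2)
      | z. C2_circle z \<and> (\<exists>t. z t \<noteq> 0) \<and> dV_integral K z = 0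
           \<and> (\<forall>v. dV_integral K (\<lambda>t. z t * ell K v t) = 0) }"

end

theory Submission
  imports Defs "HOL-Library.Periodic_Fun"
begin

(* Write h_K, h_L for the support functions as functions of the normal angle and
   B(f, g) = \<integral> f (g'' + g) over a period (area_form), so that V(L) = B(h_L, h_L) / 2 and
   V(K, L) = B(h_L, h_K) / 2; the area formula comes from the polar parametrisation r x(t),
   0 < r \<le> 1, of L - {0} by the boundary points x(t).

   Decompose h_L = c h_K + (a cos + b sin) + g with c = V(K, L) / V(K), choosing the
   translation part a cos + b sin so that g is orthogonal to cos and sin for the weight
   w = (h_K'' + h_K) / h_K; then B(g, h_K) = 0.  With A = \<integral> g^2 w, N = - B(g, g) and
   P = \<integral> (g'' + g)^2 / w, the left-hand side is (P + N) / 2 and the right-hand side is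
   lambda_2 N / 2.  Minkowski's inequality, a consequence of Wirtinger's inequality, gives N \<ge> 0,
   Cauchy-Schwarz gives N^2 \<le> A P, and g / h_K is admissible for lambda_2(-L_K) with Rayleigh
   quotient (A + N) / A.  Hence lambda_2 N \<le> N + N^2 / A \<le> N + P.  For the disc, h_K = 1 and
   w = 1, and the Rayleigh bound 4 is Wirtinger's inequality for functions orthogonal to 1, cos
   and sin. *)

section \<open>Twice differentiable periodic functions\<close>

definition C2_periodic :: "(real \<Rightarrow> real) \<Rightarrow> (real \<Rightarrow> real) \<Rightarrow> (real \<Rightarrow> real) \<Rightarrow> bool" where
  "C2_periodic f f' f'' \<longleftrightarrow> (\<forall>t. f (t + 2*pi) = f t) \<and> (\<forall>t. (f has_real_derivative f' t) (at t))
     \<and> (\<forall>t. (f' has_real_derivative f'' t) (at t)) \<and> continuous_on UNIV f''"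

lemma C2_periodicD:
  assumes "C2_periodic f f' f''"
  shows "f (t + 2*pi) = f t" "(f has_real_derivative f' t) (at t)"
    "(f' has_real_derivative f'' t) (at t)" "continuous_on UNIV f''"
  using assms unfolding C2_periodic_def by auto

lemma periodic_deriv_periodic:
  assumes "\<And>t. f (t + 2*pi) = f t" "\<And>t. (f has_real_derivative f' t) (at t)"
  shows "f' (t + 2*pi) = f' t"
proof -
  have "((\<lambda>s. f (s + 2*pi)) has_real_derivative f' (t + 2*pi)) (at t)"
    using assms(2)[of "t + 2*pi"] DERIV_shift by blast
  moreover have "(\<lambda>s. f (s + 2*pi)) = f"
    using assms(1) by auto
  ultimately show ?thesis
    using assms(2) DERIV_unique by metis
qed

lemma C2_periodic_periodic:
  assumes "C2_periodic f f' f''"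
  shows "f' (t + 2*pi) = f' t" "f'' (t + 2*pi) = f'' t"
  using periodic_deriv_periodic[of f f'] periodic_deriv_periodic[of f' f''] C2_periodicD[OF assms]
  by metis+

lemma C2_periodic_continuous:
  assumes "C2_periodic f f' f''"
  shows "continuous_on UNIV f" "continuous_on UNIV f'" "continuous_on UNIV f''"
  using C2_periodicD[OF assms]
  by (meson DERIV_isCont continuous_at_imp_continuous_on)+

lemma C2_periodic_deriv:
  assumes "C2_periodic f f' f''"
  shows "deriv f = f'" "deriv (deriv f) = f''"
proof -
  show f': "deriv f = f'"
    using C2_periodicD(2)[OF assms] by (auto intro!: DERIV_imp_deriv)
  show "deriv (deriv f) = f''"
    unfolding f' using C2_periodicD(3)[OF assms] by (auto intro!: DERIV_imp_deriv)
qed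

lemma C2_periodic_D2:
  assumes "C2_periodic f f' f''"
  shows "D2 f t = f'' t + f t"
  unfolding D2_def C2_periodic_deriv(2)[OF assms] ..

lemma C2_periodic_continuous_D2:
  assumes "C2_periodic f f' f''"
  shows "continuous_on UNIV (D2 f)"
  using C2_periodic_continuous[OF assms] by (simp add: C2_periodic_D2[OF assms] continuous_on_add)

lemma C2_periodic_imp_C2_circle:
  assumes "C2_periodic f f' f''"
  shows "C2_circle f"
  using C2_periodicD[OF assms] C2_periodic_deriv[OF assms]
  unfolding C2_circle_def real_differentiable_def by auto

lemma C2_circle_imp_C2_periodic:
  assumes "C2_circle f"
  shows "C2_periodic f (deriv f) (deriv (deriv f))"
  using assms unfolding C2_circle_def C2_periodic_def
  by (auto simp: DERIV_deriv_iff_real_differentiable)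

lemma C2_periodic_const: "C2_periodic (\<lambda>t. c) (\<lambda>t. 0) (\<lambda>t. 0)"
  unfolding C2_periodic_def by (auto intro!: derivative_eq_intros continuous_intros)

lemma C2_periodic_trig:
  "C2_periodic (\<lambda>t. a * cos t + b * sin t) (\<lambda>t. b * cos t - a * sin t) (\<lambda>t. - (a * cos t + b * sin t))"
  unfolding C2_periodic_def by (auto intro!: derivative_eq_intros continuous_intros)

lemma C2_periodic_add:
  "C2_periodic f f' f'' \<Longrightarrow> C2_periodic g g' g'' \<Longrightarrow>
     C2_periodic (\<lambda>t. f t + g t) (\<lambda>t. f' t + g' t) (\<lambda>t. f'' t + g'' t)"
  and C2_periodic_diff:
  "C2_periodic f f' f'' \<Longrightarrow> C2_periodic g g' g'' \<Longrightarrow>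
     C2_periodic (\<lambda>t. f t - g t) (\<lambda>t. f' t - g' t) (\<lambda>t. f'' t - g'' t)"
  and C2_periodic_cmult:
  "C2_periodic f f' f'' \<Longrightarrow> C2_periodic (\<lambda>t. c * f t) (\<lambda>t. c * f' t) (\<lambda>t. c * f'' t)"
  unfolding C2_periodic_def by (auto intro!: derivative_eq_intros continuous_intros)

lemma C2_periodic_mult:
  assumes f: "C2_periodic f f' f''" and g: "C2_periodic g g' g''"
  shows "C2_periodic (\<lambda>t. f t * g t) (\<lambda>t. f' t * g t + f t * g' t)
           (\<lambda>t. f'' t * g t + 2 * f' t * g' t + f t * g'' t)"
  using f g C2_periodic_continuous[OF f] C2_periodic_continuous[OF g] unfolding C2_periodic_def
  by (auto intro!: derivative_eq_intros continuous_intros simp: algebra_simps)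

lemma C2_periodic_inverse:
  assumes f: "C2_periodic f f' f''" and nz: "\<And>t. f t \<noteq> 0"
  shows "C2_periodic (\<lambda>t. 1 / f t) (\<lambda>t. - f' t / (f t)^2)
           (\<lambda>t. (2 * (f' t)^2 - f t * f'' t) / (f t)^3)"
  using f nz C2_periodic_continuous[OF f] unfolding C2_periodic_def
  by (auto intro!: derivative_eq_intros continuous_intros) (auto simp: field_simps eval_nat_numeral)

lemma C2_periodic_D2_add:
  assumes "C2_periodic f f' f''" "C2_periodic g g' g''"
  shows "D2 (\<lambda>t. f t + g t) t = D2 f t + D2 g t"
  using C2_periodic_D2[OF C2_periodic_add[OF assms]] C2_periodic_D2[OF assms(1)] C2_periodic_D2[OF assms(2)]
  by simp

section \<open>Integration over a period\<close>

lemma continuous_on_UNIV_integrable: "continuous_on UNIV f \<Longrightarrow> (f::real \<Rightarrow> real) integrable_on {a..b}"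
  by (meson continuous_on_subset integrable_continuous_interval subset_UNIV)

lemma has_integral_real_derivative:
  fixes F f :: "real \<Rightarrow> real"
  assumes "a \<le> b" "\<And>t. t \<in> {a..b} \<Longrightarrow> (F has_real_derivative f t) (at t)"
  shows "(f has_integral (F b - F a)) {a..b}"
  using assms by (intro fundamental_theorem_of_calculus)
    (auto simp: has_real_derivative_iff_has_vector_derivative[symmetric] has_field_derivative_at_within)

abbreviation period_integral :: "(real \<Rightarrow> real) \<Rightarrow> real" where
  "period_integral f \<equiv> integral {0..2*pi} f"

lemma period_integral_add:
  "continuous_on UNIV f \<Longrightarrow> continuous_on UNIV g \<Longrightarrow>
     period_integral (\<lambda>t. f t + g t) = period_integral f + period_integral g"
  and period_integral_diff:
  "continuous_on UNIV f \<Longrightarrow> continuous_on UNIV g \<Longrightarrow>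
     period_integral (\<lambda>t. f t - g t) = period_integral f - period_integral g"
  by (intro integral_add integral_diff continuous_on_UNIV_integrable; assumption)+

lemma period_integral_nonneg:
  "continuous_on UNIV f \<Longrightarrow> (\<And>t. f t \<ge> 0) \<Longrightarrow> period_integral f \<ge> 0"
  by (rule integral_nonneg) (auto intro: continuous_on_UNIV_integrable)

lemma period_integral_pos:
  assumes f: "continuous_on UNIV f" and nonneg: "\<And>t. f t \<ge> 0"
    and t0: "0 < t0" "t0 < 2*pi" and pos: "f t0 > 0"
  shows "period_integral f > 0"
proof -
  have "period_integral f \<noteq> 0"
  proof
    assume "period_integral f = 0"
    then have "(f has_integral 0) (cbox 0 (2*pi))"
      using continuous_on_UNIV_integrable[OF f] by (metis box_real(2) has_integral_integral)
    then have "f t0 = 0"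
      using t0 nonneg by (intro has_integral_0_cbox_imp_0[of 0 "2*pi" f])
        (auto intro: continuous_on_subset[OF f])
    with pos show False by simp
  qed
  then show ?thesis using period_integral_nonneg[OF f nonneg] by linarith
qed

lemma integral_period_shift:
  fixes f :: "real \<Rightarrow> real"
  assumes f: "continuous_on UNIV f" and periodic: "\<And>t. f (t + 2*pi) = f t"
    and a: "0 \<le> a" "a \<le> 2*pi"
  shows "integral {a..a+2*pi} f = period_integral f"
proof -
  have "integral {2*pi-2*pi..(a+2*pi)-2*pi} (\<lambda>t. f (t + 2*pi)) = integral {2*pi..a+2*pi} f"
    by (rule integral_shift_real_ivl)
  then have "integral {2*pi..a+2*pi} f = integral {0..a} (\<lambda>t. f (t + 2*pi))"
    by simp
  also have "\<dots> = integral {0..a} f"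
    using periodic by simp
  finally have "integral {2*pi..a+2*pi} f = integral {0..a} f" .
  moreover have "integral {a..2*pi} f + integral {2*pi..a+2*pi} f = integral {a..a+2*pi} f"
    "integral {0..a} f + integral {a..2*pi} f = period_integral f"
    using a by (auto intro!: Henstock_Kurzweil_Integration.integral_combine
        continuous_on_UNIV_integrable[OF f])
  ultimately show ?thesis by linarith
qed

lemma period_integral_by_parts:
  assumes f: "C2_periodic f f' f''" and g: "C2_periodic g g' g''"
  shows "period_integral (\<lambda>t. f t * g'' t) = - period_integral (\<lambda>t. f' t * g' t)"
proof -
  have "((\<lambda>t. f' t * g' t + f t * g'' t) has_integral
          f (2*pi) * g' (2*pi) - f 0 * g' 0) {0..2*pi}"
    using C2_periodicD[OF f] C2_periodicD[OF g]
    by (intro has_integral_real_derivative[of 0 "2*pi" "\<lambda>t. f t * g' t"])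
      (auto intro!: derivative_eq_intros)
  then have "period_integral (\<lambda>t. f' t * g' t + f t * g'' t) = 0"
    using C2_periodicD(1)[OF f, of 0] C2_periodic_periodic(1)[OF g, of 0]
    by (simp add: integral_unique)
  moreover have "period_integral (\<lambda>t. f' t * g' t + f t * g'' t)
      = period_integral (\<lambda>t. f' t * g' t) + period_integral (\<lambda>t. f t * g'' t)"
    using C2_periodic_continuous[OF f] C2_periodic_continuous[OF g]
    by (intro period_integral_add continuous_intros)
  ultimately show ?thesis by simp
qed

definition area_form :: "(real \<Rightarrow> real) \<Rightarrow> (real \<Rightarrow> real) \<Rightarrow> real" where
  "area_form f g = period_integral (\<lambda>t. f t * D2 g t)"

lemma area_form_split:
  assumes f: "C2_periodic f f' f''" and g: "C2_periodic g g' g''"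
  shows "area_form f g = - period_integral (\<lambda>t. f' t * g' t) + period_integral (\<lambda>t. f t * g t)"
proof -
  have "area_form f g = period_integral (\<lambda>t. f t * g'' t) + period_integral (\<lambda>t. f t * g t)"
    unfolding area_form_def C2_periodic_D2[OF g] distrib_left
    using C2_periodic_continuous[OF f] C2_periodic_continuous[OF g]
    by (intro period_integral_add continuous_intros)
  then show ?thesis
    using period_integral_by_parts[OF f g] by simp
qed

lemma area_form_sym:
  assumes "C2_periodic f f' f''" "C2_periodic g g' g''"
  shows "area_form f g = area_form g f"
  using area_form_split[OF assms] area_form_split[OF assms(2,1)] by (simp add: mult.commute)

lemma area_form_self:
  assumes "C2_periodic f f' f''"
  shows "area_form f f = period_integral (\<lambda>t. (f t)^2) - period_integral (\<lambda>t. (f' t)^2)"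
  using area_form_split[OF assms assms] by (simp add: power2_eq_square)

section \<open>Wirtinger's inequalities\<close>

lemma period_integral_square_diff:
  assumes "continuous_on UNIV f" "continuous_on UNIV g"
  shows "period_integral (\<lambda>t. (f t - g t)^2)
    = period_integral (\<lambda>t. (f t)^2) - 2 * period_integral (\<lambda>t. f t * g t) + period_integral (\<lambda>t. (g t)^2)"
proof -
  have "period_integral (\<lambda>t. (f t - g t)^2)
      = period_integral (\<lambda>t. ((f t)^2 - 2 * (f t * g t)) + (g t)^2)"
    by (simp add: power2_eq_square algebra_simps)
  also have "\<dots> = period_integral (\<lambda>t. (f t)^2) - period_integral (\<lambda>t. 2 * (f t * g t))
      + period_integral (\<lambda>t. (g t)^2)"
    using assms by (simp add: period_integral_add period_integral_diff continuous_intros)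
  finally show ?thesis by simp
qed

text \<open>Picone's identity: with the positive solution w t = sin (c (t - a) + \<delta>) of w'' = - c^2 w,
  (u^2 w'/w)' = u'^2 - c^2 u^2 - (u' - u w'/w)^2, whose integral vanishes since u a = u b = 0.\<close>

lemma Wirtinger_Dirichlet_subcritical:
  fixes u u' :: "real \<Rightarrow> real"
  assumes ab: "a < b" and u: "\<And>t. (u has_real_derivative u' t) (at t)" and u': "continuous_on UNIV u'"
    and ua: "u a = 0" and ub: "u b = 0" and c: "0 < c" "c * (b - a) < pi"
  shows "c^2 * integral {a..b} (\<lambda>t. (u t)^2) \<le> integral {a..b} (\<lambda>t. (u' t)^2)"
proof -
  define \<delta> where "\<delta> = (pi - c * (b - a)) / 2"
  define w where "w t = sin (c * (t - a) + \<delta>)" for t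
  define w' where "w' t = c * cos (c * (t - a) + \<delta>)" for t
  have w_pos: "w t > 0" if "t \<in> {a..b}" for t
  proof -
    have "0 \<le> c * (t - a)" "c * (t - a) \<le> c * (b - a)"
      using that c by (auto intro!: mult_left_mono)
    then have "0 < c * (t - a) + \<delta>" "c * (t - a) + \<delta> < pi"
      using c unfolding \<delta>_def by argo+
    then show ?thesis
      unfolding w_def by (rule sin_gt_zero)
  qed
  have u_cont: "continuous_on UNIV u"
    by (meson DERIV_isCont continuous_at_imp_continuous_on u)
  define R where "R t = (u' t - u t * w' t / w t)^2" for t
  define E where "E t = (u' t)^2 - c^2 * (u t)^2 - R t" for t
  have "((\<lambda>t. (u t)^2 * w' t / w t) has_real_derivative E t) (at t)" if "t \<in> {a..b}" for t
  proof -
    have "w t \<noteq> 0" using w_pos[OF that] by simp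
    then show ?thesis
      unfolding w_def w'_def E_def R_def
      by (auto intro!: derivative_eq_intros u simp: field_simps power2_eq_square)
  qed
  then have E: "(E has_integral 0) {a..b}"
    using has_integral_real_derivative[of a b "\<lambda>t. (u t)^2 * w' t / w t" E] ab ua ub by simp
  have "continuous_on {a..b} R"
    unfolding R_def w_def w'_def using w_pos
    by (auto intro!: continuous_intros continuous_on_subset[OF u_cont] continuous_on_subset[OF u']
        simp: w_def) force
  then have R: "R integrable_on {a..b}" "integral {a..b} R \<ge> 0"
    by (auto intro!: integrable_continuous_interval integral_nonneg simp: R_def)
  have "integral {a..b} (\<lambda>t. (u' t)^2) - c^2 * integral {a..b} (\<lambda>t. (u t)^2)
      = integral {a..b} (\<lambda>t. (u' t)^2 - c^2 * (u t)^2)"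
    using u_cont u' by (simp add: integral_diff continuous_on_UNIV_integrable continuous_intros)
  also have "\<dots> = integral {a..b} (\<lambda>t. R t + E t)"
    by (simp add: E_def)
  also have "\<dots> = integral {a..b} R"
    using R E by (simp add: integral_add integral_unique has_integral_integrable)
  finally show ?thesis using R by linarith
qed

lemma Wirtinger_Dirichlet:
  fixes u u' :: "real \<Rightarrow> real"
  assumes ab: "a < b" and u: "\<And>t. (u has_real_derivative u' t) (at t)" and u': "continuous_on UNIV u'"
    and ua: "u a = 0" and ub: "u b = 0"
  shows "(pi / (b - a))^2 * integral {a..b} (\<lambda>t. (u t)^2) \<le> integral {a..b} (\<lambda>t. (u' t)^2)"
proof -
  define X where "X = integral {a..b} (\<lambda>t. (u t)^2)"
  define Y where "Y = integral {a..b} (\<lambda>t. (u' t)^2)"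
  have "continuous_on UNIV u"
    by (meson DERIV_isCont continuous_at_imp_continuous_on u)
  then have X: "X \<ge> 0"
    unfolding X_def by (intro integral_nonneg continuous_on_UNIV_integrable continuous_intros) auto
  have "c^2 * X \<le> Y" if "0 < c" "c < pi / (b - a)" for c
    unfolding X_def Y_def using that ab
    by (intro Wirtinger_Dirichlet_subcritical[OF ab u u' ua ub]) (auto simp: field_simps)
  then have "eventually (\<lambda>c. c^2 * X \<le> Y) (at_left (pi / (b - a)))"
    using ab by (intro eventually_at_leftI[of 0]) auto
  moreover have "((\<lambda>c. c^2 * X) \<longlongrightarrow> (pi / (b - a))^2 * X) (at_left (pi / (b - a)))"
    by (intro tendsto_intros)
  ultimately have "(pi / (b - a))^2 * X \<le> Y"
    by (intro tendsto_upperbound) auto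
  then show ?thesis by (simp add: X_def Y_def)
qed

lemma Wirtinger_equally_spaced_zeros:
  fixes u u' :: "real \<Rightarrow> real"
  assumes d: "0 < d" and u: "\<And>t. (u has_real_derivative u' t) (at t)" and u': "continuous_on UNIV u'"
    and zeros: "\<And>j. j \<le> n \<Longrightarrow> u (a + real j * d) = 0"
  shows "(pi / d)^2 * integral {a..a + real n * d} (\<lambda>t. (u t)^2)
           \<le> integral {a..a + real n * d} (\<lambda>t. (u' t)^2)"
  using zeros
proof (induction n)
  case 0
  then show ?case by simp
next
  case (Suc n)
  let ?b = "a + real n * d" and ?c = "a + real (Suc n) * d"
  have u_cont: "continuous_on UNIV u"
    by (meson DERIV_isCont continuous_at_imp_continuous_on u)
  have combine: "integral {a..?b} (\<lambda>t. (v t)^2) + integral {?b..?c} (\<lambda>t. (v t)^2)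
      = integral {a..?c} (\<lambda>t. (v t)^2)" if "continuous_on UNIV v" for v :: "real \<Rightarrow> real"
    by (rule Henstock_Kurzweil_Integration.integral_combine)
      (use that d in \<open>auto intro!: continuous_on_UNIV_integrable continuous_intros simp: distrib_right\<close>)
  have IH: "(pi / d)^2 * integral {a..?b} (\<lambda>t. (u t)^2) \<le> integral {a..?b} (\<lambda>t. (u' t)^2)"
    using Suc.prems by (intro Suc.IH) auto
  have "?c - ?b = d" by (simp add: distrib_right)
  then have last: "(pi / d)^2 * integral {?b..?c} (\<lambda>t. (u t)^2) \<le> integral {?b..?c} (\<lambda>t. (u' t)^2)"
    using d Suc.prems[of n] Suc.prems[of "Suc n"] Wirtinger_Dirichlet[OF _ u u', of ?b ?c]
    by (simp add: distrib_right)
  have "(pi / d)^2 * integral {a..?c} (\<lambda>t. (u t)^2)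
      = (pi / d)^2 * integral {a..?b} (\<lambda>t. (u t)^2) + (pi / d)^2 * integral {?b..?c} (\<lambda>t. (u t)^2)"
    by (metis combine[OF u_cont] distrib_left)
  then show ?case
    using IH last combine[OF u'] by linarith
qed

text \<open>Since f - p vanishes at n equally spaced points of a period, the Dirichlet inequality on each
  piece gives (n/2)^2 \<integral> (f - p)^2 \<le> \<integral> (f' - p')^2, and the orthogonality removes p.\<close>

lemma Wirtinger_from_interpolant:
  assumes f: "C2_periodic f f' f''" and p: "C2_periodic p p' p''"
    and orth: "period_integral (\<lambda>t. f t * p t) = 0" "period_integral (\<lambda>t. f' t * p' t) = 0"
    and p_energy: "period_integral (\<lambda>t. (p' t)^2) \<le> period_integral (\<lambda>t. (p t)^2)"
    and n: "2 \<le> n" and a: "0 \<le> a" "a \<le> 2*pi"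
    and interpolates: "\<And>j. j \<le> n \<Longrightarrow> f (a + real j * (2*pi / n)) = p (a + real j * (2*pi / n))"
  shows "(real n / 2)^2 * period_integral (\<lambda>t. (f t)^2) \<le> period_integral (\<lambda>t. (f' t)^2)"
proof -
  note fc = C2_periodic_continuous[OF f] and pc = C2_periodic_continuous[OF p]
  have n_pos: "real n > 0" using n by simp
  have "(pi / (2*pi / n))^2 * integral {a..a + real n * (2*pi / n)} (\<lambda>t. (f t - p t)^2)
      \<le> integral {a..a + real n * (2*pi / n)} (\<lambda>t. (f' t - p' t)^2)"
    using n_pos interpolates C2_periodicD(2)[OF f] C2_periodicD(2)[OF p] fc pc
    by (intro Wirtinger_equally_spaced_zeros) (auto intro!: derivative_eq_intros continuous_intros)
  moreover have "integral {a..a + 2*pi} (\<lambda>t. (v t)^2) = period_integral (\<lambda>t. (v t)^2)"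
    if "v = (\<lambda>t. f t - p t) \<or> v = (\<lambda>t. f' t - p' t)" for v
    using that a fc pc C2_periodicD(1)[OF f] C2_periodicD(1)[OF p]
      C2_periodic_periodic(1)[OF f] C2_periodic_periodic(1)[OF p]
    by (intro integral_period_shift) (auto intro!: continuous_intros)
  ultimately have "(real n / 2)^2 * period_integral (\<lambda>t. (f t - p t)^2)
      \<le> period_integral (\<lambda>t. (f' t - p' t)^2)"
    using n_pos by (simp add: field_simps)
  then have "(real n / 2)^2 * (period_integral (\<lambda>t. (f t)^2) + period_integral (\<lambda>t. (p t)^2))
      \<le> period_integral (\<lambda>t. (f' t)^2) + period_integral (\<lambda>t. (p' t)^2)"
    using orth fc pc by (simp add: period_integral_square_diff)
  moreover have "1 \<le> (real n / 2)^2" "period_integral (\<lambda>t. (p t)^2) \<ge> 0"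
    using n pc by (auto intro!: period_integral_nonneg continuous_intros)
  then have "period_integral (\<lambda>t. (p t)^2) \<le> (real n / 2)^2 * period_integral (\<lambda>t. (p t)^2)"
    using mult_right_mono by fastforce
  ultimately show ?thesis
    using p_energy by (simp add: distrib_left)
qed

lemma continuous_on_shift:
  fixes f :: "real \<Rightarrow> real"
  shows "continuous_on UNIV f \<Longrightarrow> continuous_on UNIV (\<lambda>t. f (t + c))"
  by (rule continuous_on_compose2[of UNIV f UNIV "\<lambda>t. t + c"]) (auto intro!: continuous_intros)

lemma IVT_antisymmetric:
  fixes d :: "real \<Rightarrow> real"
  assumes "continuous_on UNIV d" "d s = - d 0" "0 \<le> s"
  shows "\<exists>a. 0 \<le> a \<and> a \<le> s \<and> d a = 0"
proof -
  have "isCont d t" for t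
    using assms(1) by (simp add: continuous_on_eq_continuous_at)
  then show ?thesis
    using assms IVT[of d 0 0 s] IVT2[of d s 0 0] by (cases "d 0 \<le> 0") auto
qed

lemma Wirtinger_mean_zero:
  assumes f: "C2_periodic f f' f''" and mean: "period_integral f = 0"
  shows "period_integral (\<lambda>t. (f t)^2) \<le> period_integral (\<lambda>t. (f' t)^2)"
proof -
  note fc = C2_periodic_continuous(1)[OF f]
  have "continuous_on UNIV (\<lambda>t. f t - f (t + pi))"
    using continuous_on_diff[OF fc continuous_on_shift[OF fc]] .
  moreover have "f pi - f (pi + pi) = - (f 0 - f (0 + pi))"
    using C2_periodicD(1)[OF f, of 0] by (simp add: mult_2[symmetric])
  ultimately obtain a where a: "0 \<le> a" "a \<le> pi" "f a - f (a + pi) = 0"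
    using IVT_antisymmetric[of "\<lambda>t. f t - f (t + pi)" pi] by auto
  have "a \<le> 2*pi" using a(2) pi_gt_zero by linarith
  have interpolates: "f (a + real j * (2*pi / 2)) = f a" if "j \<le> 2" for j
  proof -
    have "j = 0 \<or> j = 1 \<or> j = 2" using that by auto
    moreover have "f (a + pi) = f a" "f (a + 2*pi) = f a"
      using a(3) C2_periodicD(1)[OF f, of a] by simp_all
    ultimately show ?thesis by (elim disjE) simp_all
  qed
  have "(real 2 / 2)^2 * period_integral (\<lambda>t. (f t)^2) \<le> period_integral (\<lambda>t. (f' t)^2)"
    using Wirtinger_from_interpolant[OF f C2_periodic_const[of "f a"], of 2 a] a(1) \<open>a \<le> 2*pi\<close>
      mean interpolates by simp
  then show ?thesis by simp
qed

lemma trig_interpolation: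
  assumes "y0 + y2 = y1 + y3"
  obtains c \<alpha> \<beta> :: real
  where "c + (\<alpha> * cos a + \<beta> * sin a) = y0"
    "c + (\<alpha> * cos (a + pi/2) + \<beta> * sin (a + pi/2)) = y1"
    "c + (\<alpha> * cos (a + pi) + \<beta> * sin (a + pi)) = y2"
    "c + (\<alpha> * cos (a + 3*pi/2) + \<beta> * sin (a + 3*pi/2)) = y3"
proof
  define \<Delta>1 \<Delta>2 where "\<Delta>1 = y0 - y2" and "\<Delta>2 = y1 - y3"
  define \<alpha> \<beta> where "\<alpha> = (\<Delta>1 * cos a - \<Delta>2 * sin a) / 2" and "\<beta> = (\<Delta>1 * sin a + \<Delta>2 * cos a) / 2"
  have shifts: "cos (a + pi/2) = - sin a" "sin (a + pi/2) = cos a"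
    "cos (a + 3*pi/2) = sin a" "sin (a + 3*pi/2) = - cos a"
    using cos_add[of a "pi/2"] sin_add[of a "pi/2"] cos_add[of "a + pi" "pi/2"] sin_add[of "a + pi" "pi/2"]
    by (simp_all add: add.assoc)
  have "\<alpha> * cos a + \<beta> * sin a = \<Delta>1 / 2 * ((sin a)^2 + (cos a)^2)"
    "\<alpha> * cos (a + pi/2) + \<beta> * sin (a + pi/2) = \<Delta>2 / 2 * ((sin a)^2 + (cos a)^2)"
    unfolding \<alpha>_def \<beta>_def shifts
    by (simp_all add: field_simps power2_eq_square del: sin_cos_squared_add sin_cos_squared_add2
        sin_cos_squared_add3)
  then show "(y0 + y2) / 2 + (\<alpha> * cos a + \<beta> * sin a) = y0"
    "(y0 + y2) / 2 + (\<alpha> * cos (a + pi/2) + \<beta> * sin (a + pi/2)) = y1"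
    "(y0 + y2) / 2 + (\<alpha> * cos (a + pi) + \<beta> * sin (a + pi)) = y2"
    "(y0 + y2) / 2 + (\<alpha> * cos (a + 3*pi/2) + \<beta> * sin (a + 3*pi/2)) = y3"
    using assms shifts by (simp_all add: \<Delta>1_def \<Delta>2_def field_simps)
qed

lemma D2_trig_polynomial:
  "D2 (\<lambda>t. c + (\<alpha> * cos t + \<beta> * sin t)) t = c"
  using C2_periodic_D2[OF C2_periodic_add[OF C2_periodic_const C2_periodic_trig]] by simp

lemma area_form_trig_polynomial:
  "area_form (\<lambda>t. c + (\<alpha> * cos t + \<beta> * sin t)) (\<lambda>t. c + (\<alpha> * cos t + \<beta> * sin t)) = 2 * pi * c^2"
proof -
  let ?p = "\<lambda>t. c + (\<alpha> * cos t + \<beta> * sin t)"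
  have p: "C2_periodic ?p (\<lambda>t. 0 + (\<beta> * cos t - \<alpha> * sin t)) (\<lambda>t. 0 + - (\<alpha> * cos t + \<beta> * sin t))"
    by (rule C2_periodic_add[OF C2_periodic_const C2_periodic_trig])
  have "area_form ?p ?p = area_form ?p (\<lambda>t. c)"
    unfolding area_form_def D2_trig_polynomial by (simp add: D2_def)
  also have "\<dots> = area_form (\<lambda>t. c) ?p"
    by (rule area_form_sym[OF p C2_periodic_const])
  also have "\<dots> = 2 * pi * c^2"
    unfolding area_form_def D2_trig_polynomial by (simp add: power2_eq_square)
  finally show ?thesis .
qed

lemma period_integral_mult_trig_polynomial:
  assumes "continuous_on UNIV f"
  shows "period_integral (\<lambda>t. f t * (c + (\<alpha> * cos t + \<beta> * sin t)))
    = c * period_integral f + \<alpha> * period_integral (\<lambda>t. f t * cos t) + \<beta> * period_integral (\<lambda>t. f t * sin t)"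
proof -
  have "period_integral (\<lambda>t. f t * (c + (\<alpha> * cos t + \<beta> * sin t)))
      = period_integral (\<lambda>t. c * f t + (\<alpha> * (f t * cos t) + \<beta> * (f t * sin t)))"
    by (simp add: algebra_simps)
  also have "\<dots> = c * period_integral f + (\<alpha> * period_integral (\<lambda>t. f t * cos t)
      + \<beta> * period_integral (\<lambda>t. f t * sin t))"
    using assms by (simp add: period_integral_add continuous_intros)
  finally show ?thesis by simp
qed

lemma trig_interpolant_quarter_points:
  assumes f: "C2_periodic f f' f''"
  obtains a c \<alpha> \<beta> where "0 \<le> a" "a \<le> 2*pi"
    "\<And>j. j \<le> 4 \<Longrightarrow>
      f (a + real j * (2*pi / 4)) = c + (\<alpha> * cos (a + real j * (2*pi / 4)) + \<beta> * sin (a + real j * (2*pi / 4)))"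
proof -
  note fc = C2_periodic_continuous(1)[OF f]
  define d where "d t = f t + f (t + pi) - f (t + pi/2) - f (t + 3*pi/2)" for t
  have "continuous_on UNIV d"
    unfolding d_def using fc continuous_on_shift[OF fc]
    by (intro continuous_on_add continuous_on_diff) auto
  moreover have "d (pi/2) = - d 0"
  proof -
    have "pi/2 + pi = 3*pi/2" "pi/2 + pi/2 = pi" "pi/2 + 3*pi/2 = 0 + 2*pi" by simp_all
    then show ?thesis
      unfolding d_def using C2_periodicD(1)[OF f, of 0] by simp
  qed
  ultimately obtain a where a: "0 \<le> a" "a \<le> pi/2" "d a = 0"
    using IVT_antisymmetric[of d "pi/2"] by auto
  then have "f a + f (a + pi) = f (a + pi/2) + f (a + 3*pi/2)"
    by (simp add: d_def)
  then obtain c \<alpha> \<beta> where interp: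
    "c + (\<alpha> * cos a + \<beta> * sin a) = f a"
    "c + (\<alpha> * cos (a + pi/2) + \<beta> * sin (a + pi/2)) = f (a + pi/2)"
    "c + (\<alpha> * cos (a + pi) + \<beta> * sin (a + pi)) = f (a + pi)"
    "c + (\<alpha> * cos (a + 3*pi/2) + \<beta> * sin (a + 3*pi/2)) = f (a + 3*pi/2)"
    by (rule trig_interpolation)
  have "f (a + real j * (2*pi / 4))
      = c + (\<alpha> * cos (a + real j * (2*pi / 4)) + \<beta> * sin (a + real j * (2*pi / 4)))"
    if "j \<le> 4" for j
  proof -
    have "j = 0 \<or> j = 1 \<or> j = 2 \<or> j = 3 \<or> j = 4" using that by auto
    moreover have "f (a + 2*pi) = c + (\<alpha> * cos (a + 2*pi) + \<beta> * sin (a + 2*pi))"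
      using interp(1) C2_periodicD(1)[OF f, of a] by simp
    moreover have "a + 3 * (2*pi / 4) = a + 3*pi/2" by simp
    ultimately show ?thesis
      using interp by (elim disjE) simp_all
  qed
  moreover have "a \<le> 2*pi" using a(2) pi_gt_zero by linarith
  ultimately show ?thesis using that a(1) by blast
qed

lemma Wirtinger_orthogonal_trig:
  assumes f: "C2_periodic f f' f''" and mean: "period_integral f = 0"
    and cos: "period_integral (\<lambda>t. f t * cos t) = 0" and sin: "period_integral (\<lambda>t. f t * sin t) = 0"
  shows "4 * period_integral (\<lambda>t. (f t)^2) \<le> period_integral (\<lambda>t. (f' t)^2)"
proof -
  note fc = C2_periodic_continuous(1)[OF f]
  obtain a c \<alpha> \<beta> where a: "0 \<le> a" "a \<le> 2*pi" and interpolates: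
    "\<And>j. j \<le> 4 \<Longrightarrow>
      f (a + real j * (2*pi / 4)) = c + (\<alpha> * cos (a + real j * (2*pi / 4)) + \<beta> * sin (a + real j * (2*pi / 4)))"
    using trig_interpolant_quarter_points[OF f] by blast
  define p where "p t = c + (\<alpha> * cos t + \<beta> * sin t)" for t
  have p: "C2_periodic p (\<lambda>t. 0 + (\<beta> * cos t - \<alpha> * sin t)) (\<lambda>t. 0 + - (\<alpha> * cos t + \<beta> * sin t))"
    unfolding p_def[abs_def] by (rule C2_periodic_add[OF C2_periodic_const C2_periodic_trig])
  have "period_integral (\<lambda>t. f t * p t) = 0"
    unfolding p_def using fc mean cos sin by (simp add: period_integral_mult_trig_polynomial)
  moreover have "period_integral (\<lambda>t. f' t * (0 + (\<beta> * cos t - \<alpha> * sin t))) = 0"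
    using period_integral_by_parts[OF f p] period_integral_mult_trig_polynomial[OF fc, of 0 "- \<alpha>" "- \<beta>"]
      cos sin by simp
  moreover have "period_integral (\<lambda>t. (0 + (\<beta> * cos t - \<alpha> * sin t))^2) \<le> period_integral (\<lambda>t. (p t)^2)"
  proof -
    have "area_form p p \<ge> 0"
      by (simp add: p_def[abs_def] area_form_trig_polynomial)
    then show ?thesis using area_form_self[OF p] by linarith
  qed
  ultimately have "(real 4 / 2)^2 * period_integral (\<lambda>t. (f t)^2) \<le> period_integral (\<lambda>t. (f' t)^2)"
    using Wirtinger_from_interpolant[OF f p, of 4 a] a interpolates by (simp add: p_def)
  then show ?thesis by simp
qed

section \<open>Cauchy-Schwarz and Minkowski inequalities\<close>

lemma discriminant_le_if_quadratic_nonneg: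
  fixes A B C :: real
  assumes nonneg: "\<And>s. 0 \<le> s^2 * A - 2 * s * B + C" and A: "A \<ge> 0"
  shows "B^2 \<le> A * C"
proof (cases "A = 0")
  case True
  then have "B = 0"
    using nonneg[of "(C + 1) / (2 * B)"] by (cases "B = 0") (auto simp: field_simps)
  then show ?thesis using True by simp
next
  case False
  have "0 \<le> (B/A)^2 * A - 2 * (B/A) * B + C" by (rule nonneg)
  also have "\<dots> = C - B^2 / A" using False by (simp add: field_simps power2_eq_square)
  finally show ?thesis using A False by (simp add: field_simps)
qed

lemma period_integral_Cauchy_Schwarz:
  assumes F: "continuous_on UNIV F" and G: "continuous_on UNIV G" and w: "continuous_on UNIV w"
    and w_pos: "\<And>t. w t > 0"
  shows "(period_integral (\<lambda>t. F t * G t))^2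
           \<le> period_integral (\<lambda>t. (F t)^2 * w t) * period_integral (\<lambda>t. (G t)^2 / w t)"
proof (rule discriminant_le_if_quadratic_nonneg)
  have w_nz: "w t \<noteq> 0" for t using w_pos[of t] by simp
  fix s :: real
  have "0 \<le> period_integral (\<lambda>t. (s * F t * w t - G t)^2 / w t)"
    using F G w w_pos w_nz by (intro period_integral_nonneg continuous_intros) (auto intro: divide_nonneg_pos)
  also have "period_integral (\<lambda>t. (s * F t * w t - G t)^2 / w t)
      = period_integral (\<lambda>t. (s^2 * ((F t)^2 * w t) - 2 * s * (F t * G t)) + (G t)^2 / w t)"
    by (rule arg_cong[where f = period_integral]) (simp add: w_nz field_simps power2_eq_square)
  also have "\<dots> = s^2 * period_integral (\<lambda>t. (F t)^2 * w t) - 2 * s * period_integral (\<lambda>t. F t * G t)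
      + period_integral (\<lambda>t. (G t)^2 / w t)"
    using F G w w_nz by (simp add: period_integral_add period_integral_diff continuous_intros)
  finally show "0 \<le> s^2 * period_integral (\<lambda>t. (F t)^2 * w t) - 2 * s * period_integral (\<lambda>t. F t * G t)
      + period_integral (\<lambda>t. (G t)^2 / w t)" .
next
  show "0 \<le> period_integral (\<lambda>t. (F t)^2 * w t)"
    using F w w_pos less_imp_le[OF w_pos]
    by (intro period_integral_nonneg continuous_intros) (auto intro: mult_nonneg_nonneg)
qed

lemma area_form_add_left:
  assumes "C2_periodic f f' f''" "C2_periodic g g' g''" "C2_periodic k k' k''"
  shows "area_form (\<lambda>t. f t + g t) k = area_form f k + area_form g k"
  using C2_periodic_continuous(1)[OF assms(1)] C2_periodic_continuous(1)[OF assms(2)]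
    C2_periodic_continuous_D2[OF assms(3)]
  unfolding area_form_def by (simp add: distrib_right period_integral_add continuous_intros)

lemma area_form_cmult_left: "area_form (\<lambda>t. c * f t) k = c * area_form f k"
  unfolding area_form_def by (simp add: mult.assoc)

lemma area_form_add_right:
  assumes "C2_periodic f f' f''" "C2_periodic g g' g''" "C2_periodic k k' k''"
  shows "area_form k (\<lambda>t. f t + g t) = area_form k f + area_form k g"
  using area_form_sym[OF assms(3) C2_periodic_add[OF assms(1,2)]] area_form_add_left[OF assms]
    area_form_sym[OF assms(3,1)] area_form_sym[OF assms(3,2)] by simp

lemma area_form_cmult_right:
  assumes "C2_periodic f f' f''" "C2_periodic k k' k''"
  shows "area_form k (\<lambda>t. c * f t) = c * area_form k f"
  using area_form_sym[OF assms(2) C2_periodic_cmult[OF assms(1)]] area_form_sym[OF assms(2,1)]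
  by (simp add: area_form_cmult_left)

lemma area_form_trig_right: "area_form f (\<lambda>t. \<alpha> * cos t + \<beta> * sin t) = 0"
  unfolding area_form_def C2_periodic_D2[OF C2_periodic_trig] by simp

lemma area_form_linear_combination:
  assumes f: "C2_periodic f f' f''" and g: "C2_periodic g g' g''"
  shows "area_form (\<lambda>t. a * f t + b * g t) (\<lambda>t. a * f t + b * g t)
    = a^2 * area_form f f + 2 * a * b * area_form f g + b^2 * area_form g g"
proof -
  let ?h = "\<lambda>t. a * f t + b * g t"
  note af = C2_periodic_cmult[OF f, of a] and bg = C2_periodic_cmult[OF g, of b]
  note h = C2_periodic_add[OF af bg]
  have "area_form f ?h = a * area_form f f + b * area_form f g"
    by (simp add: area_form_add_right[OF af bg f] area_form_cmult_right[OF f f] area_form_cmult_right[OF g f])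
  moreover have "area_form g ?h = a * area_form f g + b * area_form g g"
    by (simp add: area_form_add_right[OF af bg g] area_form_cmult_right[OF f g] area_form_cmult_right[OF g g]
        area_form_sym[OF f g])
  ultimately show ?thesis
    by (simp add: area_form_add_left[OF af bg h] area_form_cmult_left power2_eq_square algebra_simps)
qed

text \<open>Minkowski's inequality V(K,L)^2 \<ge> V(K) V(L), as it reads for the area form.\<close>

lemma area_form_nonpos_if_orthogonal:
  assumes k: "C2_periodic k k' k''" and f: "C2_periodic f f' f''"
    and k_mean: "period_integral k > 0" and kk: "area_form k k \<ge> 0" and fk: "area_form f k = 0"
  shows "area_form f f \<le> 0"
proof -
  define \<tau> where "\<tau> = period_integral f / period_integral k"
  define g where "g t = 1 * f t + (- \<tau>) * k t" for t
  have g: "C2_periodic g (\<lambda>t. 1 * f' t + (- \<tau>) * k' t) (\<lambda>t. 1 * f'' t + (- \<tau>) * k'' t)"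
    unfolding g_def[abs_def] by (intro C2_periodic_add C2_periodic_cmult f k)
  have "period_integral g = period_integral f - \<tau> * period_integral k"
    unfolding g_def using C2_periodic_continuous(1)[OF f] C2_periodic_continuous(1)[OF k]
    by (simp add: period_integral_diff continuous_intros)
  then have "period_integral g = 0" using k_mean by (simp add: \<tau>_def)
  then have "area_form g g \<le> 0"
    using Wirtinger_mean_zero[OF g] area_form_self[OF g] by simp
  moreover have "area_form g g = area_form f f + \<tau>^2 * area_form k k"
    unfolding g_def area_form_linear_combination[OF f k] using fk by simp
  moreover have "\<tau>^2 * area_form k k \<ge> 0"
    using kk by simp
  ultimately show ?thesis by linarith
qed

lemma stability_from_Cauchy_Schwarz:
  fixes a N P \<mu> :: real
  assumes "0 \<le> a" "0 \<le> N" "0 \<le> P" "N^2 \<le> a * P" "0 < a \<Longrightarrow> \<mu> * a \<le> a + N"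
  shows "\<mu> * N \<le> P + N"
proof (cases "N = 0")
  case False
  then have "0 < N^2" by simp
  then have "0 < a * P" using assms(4) by linarith
  then have a: "0 < a" using assms(1) by (cases "a = 0") auto
  have "(\<mu> * N) * a = (\<mu> * a) * N" by simp
  also have "\<dots> \<le> (a + N) * N" using mult_right_mono[OF assms(5)[OF a] assms(2)] .
  also have "\<dots> \<le> (N + P) * a" using assms(4) by (simp add: algebra_simps power2_eq_square)
  finally show ?thesis using a by (simp add: add.commute)
qed (use assms in simp)

section \<open>The stability estimate for a positive support function\<close>

locale positive_support =
  fixes k k' k'' :: "real \<Rightarrow> real"
  assumes C2: "C2_periodic k k' k''" and pos: "\<And>t. k t > 0" and D2_pos: "\<And>t. D2 k t > 0"
begin

definition weight :: "real \<Rightarrow> real" where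
  "weight t = D2 k t / k t"

lemma weight_pos: "weight t > 0"
  using pos[of t] D2_pos[of t] by (simp add: weight_def)

lemma continuous_weight: "continuous_on UNIV weight"
  unfolding weight_def using C2_periodic_continuous_D2[OF C2] C2_periodic_continuous(1)[OF C2] pos
  by (intro continuous_intros) (auto simp: less_imp_neq[symmetric])

lemma integral_pos: "period_integral k > 0"
  using C2_periodic_continuous(1)[OF C2] pos
  by (intro period_integral_pos[of _ pi]) (auto intro: less_imp_le)

lemma area_form_pos: "area_form k k > 0"
  unfolding area_form_def using C2_periodic_continuous(1)[OF C2] C2_periodic_continuous_D2[OF C2] pos D2_pos
  by (intro period_integral_pos[of _ pi] continuous_intros) (auto intro: less_imp_le)

definition weighted_product :: "(real \<Rightarrow> real) \<Rightarrow> (real \<Rightarrow> real) \<Rightarrow> real" where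
  "weighted_product u v = period_integral (\<lambda>t. u t * v t * weight t)"

lemma weighted_product_diff_trig:
  assumes "continuous_on UNIV u" "continuous_on UNIV v"
  shows "weighted_product (\<lambda>t. u t - (\<alpha> * cos t + \<beta> * sin t)) v
    = weighted_product u v - \<alpha> * weighted_product cos v - \<beta> * weighted_product sin v"
proof -
  have "weighted_product (\<lambda>t. u t - (\<alpha> * cos t + \<beta> * sin t)) v
      = period_integral (\<lambda>t. u t * v t * weight t - \<alpha> * (cos t * v t * weight t)
          - \<beta> * (sin t * v t * weight t))"
    unfolding weighted_product_def by (simp add: algebra_simps)
  also have "\<dots> = weighted_product u v - \<alpha> * weighted_product cos v - \<beta> * weighted_product sin v"
    unfolding weighted_product_def using assms continuous_weight
    by (simp add: period_integral_diff continuous_intros)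
  finally show ?thesis .
qed

lemma trig_Gram_det_pos:
  "weighted_product cos cos * weighted_product sin sin - (weighted_product cos sin)^2 > 0"
proof -
  let ?G = weighted_product
  have sin_pos: "?G sin sin > 0"
    unfolding weighted_product_def using continuous_weight weight_pos less_imp_le[OF weight_pos]
    by (intro period_integral_pos[of _ "pi/2"] continuous_intros) auto
  define s where "s = ?G cos sin / ?G sin sin"
  have "0 < ?G (\<lambda>t. cos t - s * sin t) (\<lambda>t. cos t - s * sin t)"
    unfolding weighted_product_def using continuous_weight weight_pos less_imp_le[OF weight_pos]
    by (intro period_integral_pos[of _ pi] continuous_intros) auto
  also have "?G (\<lambda>t. cos t - s * sin t) (\<lambda>t. cos t - s * sin t)
      = period_integral (\<lambda>t. cos t * cos t * weight t - 2 * s * (cos t * sin t * weight t)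
          + s^2 * (sin t * sin t * weight t))"
    unfolding weighted_product_def by (simp add: algebra_simps power2_eq_square)
  also have "\<dots> = ?G cos cos - 2 * s * ?G cos sin + s^2 * ?G sin sin"
    unfolding weighted_product_def using continuous_weight
    by (simp add: period_integral_add period_integral_diff continuous_intros)
  finally show ?thesis
    using sin_pos by (simp add: s_def field_simps power2_eq_square)
qed

lemma trig_projection:
  assumes F: "continuous_on UNIV F"
  obtains \<alpha> \<beta> where
    "period_integral (\<lambda>t. (F t - (\<alpha> * cos t + \<beta> * sin t)) * cos t * weight t) = 0"
    "period_integral (\<lambda>t. (F t - (\<alpha> * cos t + \<beta> * sin t)) * sin t * weight t) = 0"
proof -
  let ?G = weighted_product
  define \<Delta> where "\<Delta> = ?G cos cos * ?G sin sin - (?G cos sin)^2"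
  define \<alpha> where "\<alpha> = (?G F cos * ?G sin sin - ?G F sin * ?G cos sin) / \<Delta>"
  define \<beta> where "\<beta> = (?G F sin * ?G cos cos - ?G F cos * ?G cos sin) / \<Delta>"
  have cs: "continuous_on UNIV (cos :: real \<Rightarrow> real)" "continuous_on UNIV (sin :: real \<Rightarrow> real)"
    by (auto intro!: continuous_intros)
  have "?G sin cos = ?G cos sin"
    unfolding weighted_product_def by (simp add: mult.commute)
  then have "?G F cos - \<alpha> * ?G cos cos - \<beta> * ?G sin cos = 0"
    "?G F sin - \<alpha> * ?G cos sin - \<beta> * ?G sin sin = 0"
    using trig_Gram_det_pos by (simp_all add: \<alpha>_def \<beta>_def \<Delta>_def field_simps power2_eq_square)
  then show ?thesis
    using that[of \<alpha> \<beta>] weighted_product_diff_trig[OF F cs(1)] weighted_product_diff_trig[OF F cs(2)]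
    by (simp add: weighted_product_def)
qed

lemma orthogonal_decomposition:
  assumes h: "C2_periodic h h' h''"
  obtains g g' g'' c where "C2_periodic g g' g''" "area_form g k = 0"
    "period_integral (\<lambda>t. g t * cos t * weight t) = 0" "period_integral (\<lambda>t. g t * sin t * weight t) = 0"
    "\<And>t. D2 h t = c * D2 k t + D2 g t"
    "area_form h k = c * area_form k k" "area_form h h = c^2 * area_form k k + area_form g g"
proof -
  define c where "c = area_form h k / area_form k k"
  have hk: "area_form h k = c * area_form k k"
    using area_form_pos by (simp add: c_def)
  have F: "C2_periodic (\<lambda>t. h t - c * k t) (\<lambda>t. h' t - c * k' t) (\<lambda>t. h'' t - c * k'' t)"
    by (rule C2_periodic_diff[OF h C2_periodic_cmult[OF C2]])
  obtain \<alpha> \<beta> where orth: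
    "period_integral (\<lambda>t. (h t - c * k t - (\<alpha> * cos t + \<beta> * sin t)) * cos t * weight t) = 0"
    "period_integral (\<lambda>t. (h t - c * k t - (\<alpha> * cos t + \<beta> * sin t)) * sin t * weight t) = 0"
    using trig_projection[OF C2_periodic_continuous(1)[OF F]] by blast
  define g where "g t = h t - c * k t - (\<alpha> * cos t + \<beta> * sin t)" for t
  have g: "C2_periodic g (\<lambda>t. h' t - c * k' t - (\<beta> * cos t - \<alpha> * sin t))
      (\<lambda>t. h'' t - c * k'' t - - (\<alpha> * cos t + \<beta> * sin t))"
    unfolding g_def[abs_def] by (rule C2_periodic_diff[OF F C2_periodic_trig])
  have D2g: "D2 h t = c * D2 k t + D2 g t" for t
    by (simp add: C2_periodic_D2[OF g] C2_periodic_D2[OF h] C2_periodic_D2[OF C2] g_def algebra_simps)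
  have "area_form g k = area_form h k - c * area_form k k - area_form (\<lambda>t. \<alpha> * cos t + \<beta> * sin t) k"
    unfolding g_def area_form_def
    using C2_periodic_continuous(1)[OF h] C2_periodic_continuous(1)[OF C2] C2_periodic_continuous_D2[OF C2]
    by (simp add: left_diff_distrib period_integral_diff continuous_intros mult.assoc)
  also have "area_form (\<lambda>t. \<alpha> * cos t + \<beta> * sin t) k = 0"
    using area_form_sym[OF C2_periodic_trig C2] area_form_trig_right by simp
  finally have gk: "area_form g k = 0" using hk by simp
  have "area_form h h = c * area_form h k + area_form h g"
    unfolding area_form_def D2g
    using C2_periodic_continuous(1)[OF h] C2_periodic_continuous_D2[OF C2] C2_periodic_continuous_D2[OF g]
    by (simp add: distrib_left period_integral_add continuous_intros mult.left_commute)
  moreover have "area_form g h = c * area_form g k + area_form g g"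
    unfolding area_form_def D2g
    using C2_periodic_continuous(1)[OF g] C2_periodic_continuous_D2[OF C2] C2_periodic_continuous_D2[OF g]
    by (simp add: distrib_left period_integral_add continuous_intros mult.left_commute)
  ultimately have "area_form h h = c^2 * area_form k k + area_form g g"
    using hk gk area_form_sym[OF h g] by (simp add: power2_eq_square)
  with that[OF g gk _ _ D2g hk] orth show ?thesis by (simp add: g_def)
qed

lemma period_integral_D2_square_decomposition:
  assumes g: "C2_periodic g g' g''" and gk: "area_form g k = 0"
    and D2h: "\<And>t. D2 h t = c * D2 k t + D2 g t"
  shows "period_integral (\<lambda>t. (D2 h t)^2 * k t / D2 k t)
    = c^2 * area_form k k + period_integral (\<lambda>t. (D2 g t)^2 / weight t)"
proof -
  have "(D2 h t)^2 * k t / D2 k t = c^2 * (k t * D2 k t) + 2 * c * (k t * D2 g t) + (D2 g t)^2 / weight t"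
    for t
    using pos[of t] D2_pos[of t] by (simp add: D2h weight_def field_simps power2_eq_square)
  then have "period_integral (\<lambda>t. (D2 h t)^2 * k t / D2 k t)
      = c^2 * area_form k k + 2 * c * area_form k g + period_integral (\<lambda>t. (D2 g t)^2 / weight t)"
    unfolding area_form_def
    using C2_periodic_continuous(1)[OF C2] C2_periodic_continuous_D2[OF C2] C2_periodic_continuous_D2[OF g]
      continuous_weight weight_pos
    by (simp add: period_integral_add continuous_intros less_imp_neq[symmetric])
  then show ?thesis using gk area_form_sym[OF C2 g] by simp
qed

lemma stability_estimate:
  assumes h: "C2_periodic h h' h''"
    and Rayleigh: "\<And>g g' g''. C2_periodic g g' g'' \<Longrightarrow> area_form g k = 0 \<Longrightarrow>
      period_integral (\<lambda>t. g t * cos t * weight t) = 0 \<Longrightarrow>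
      period_integral (\<lambda>t. g t * sin t * weight t) = 0 \<Longrightarrow>
      period_integral (\<lambda>t. (g t)^2 * weight t) > 0 \<Longrightarrow>
      \<mu> * period_integral (\<lambda>t. (g t)^2 * weight t)
        \<le> period_integral (\<lambda>t. (g t)^2 * weight t) - area_form g g"
  shows "\<mu> * ((area_form h k)^2 / area_form k k - area_form h h)
           \<le> period_integral (\<lambda>t. (D2 h t)^2 * k t / D2 k t) - area_form h h"
proof -
  obtain g g' g'' c where g: "C2_periodic g g' g''" and gk: "area_form g k = 0"
    and orth: "period_integral (\<lambda>t. g t * cos t * weight t) = 0"
      "period_integral (\<lambda>t. g t * sin t * weight t) = 0"
    and D2h: "\<And>t. D2 h t = c * D2 k t + D2 g t"
    and hk: "area_form h k = c * area_form k k" and hh: "area_form h h = c^2 * area_form k k + area_form g g"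
    using orthogonal_decomposition[OF h] by blast
  note gc = C2_periodic_continuous(1)[OF g] C2_periodic_continuous_D2[OF g]
  define a where "a = period_integral (\<lambda>t. (g t)^2 * weight t)"
  define N where "N = - area_form g g"
  define P where "P = period_integral (\<lambda>t. (D2 g t)^2 / weight t)"
  have "area_form g g \<le> 0"
    using area_form_nonpos_if_orthogonal[OF C2 g integral_pos less_imp_le[OF area_form_pos] gk] .
  then have N: "N \<ge> 0" by (simp add: N_def)
  have a: "a \<ge> 0" and P: "P \<ge> 0"
    unfolding a_def P_def using gc continuous_weight weight_pos less_imp_le[OF weight_pos]
    by (auto intro!: period_integral_nonneg continuous_intros simp: less_imp_neq[symmetric])
  have "N^2 \<le> a * P"
    using period_integral_Cauchy_Schwarz[OF gc continuous_weight weight_pos]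
    by (simp add: N_def a_def P_def area_form_def)
  then have "\<mu> * N \<le> P + N"
    using stability_from_Cauchy_Schwarz[OF a N P] Rayleigh[OF g gk orth] by (simp add: a_def N_def)
  moreover have "(area_form h k)^2 / area_form k k - area_form h h = N"
    using area_form_pos by (simp add: hk hh N_def power2_eq_square)
  moreover have "period_integral (\<lambda>t. (D2 h t)^2 * k t / D2 k t) = c^2 * area_form k k + P"
    unfolding P_def by (rule period_integral_D2_square_decomposition[OF g gk D2h])
  ultimately show ?thesis by (simp add: hh N_def)
qed

end

section \<open>Plane geometry and polar coordinates\<close>

lemma double_zeros_more_than_pi_apart:
  fixes p p' p'' :: "real \<Rightarrow> real"
  assumes p: "\<And>t. (p has_real_derivative p' t) (at t)" and p': "\<And>t. (p' has_real_derivative p'' t) (at t)"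
    and pos: "\<And>t. p'' t + p t > 0" and ab: "a < b"
    and zeros: "p a = 0" "p' a = 0" "p b = 0" "p' b = 0"
  shows "a + pi < b"
proof (rule ccontr)
  assume "\<not> a + pi < b"
  define q where "q s = p' s * sin (s - a) - p s * cos (s - a)" for s
  have "(q has_real_derivative (p'' s + p s) * sin (s - a)) (at s)" for s
    unfolding q_def by (auto intro!: derivative_eq_intros p p' simp: algebra_simps)
  then obtain c where c: "a < c" "c < b" "q b - q a = (b - a) * ((p'' c + p c) * sin (c - a))"
    using MVT2[OF ab, of q "\<lambda>s. (p'' s + p s) * sin (s - a)"] by blast
  have "sin (c - a) > 0"
    using c \<open>\<not> a + pi < b\<close> by (intro sin_gt_zero) auto
  then have "q b - q a > 0"
    using c ab pos[of c] by simp
  then show False using zeros by (simp add: q_def)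
qed

lemma rotation_inverse:
  fixes a b t :: real
  shows "(a * cos t - b * sin t) * cos t + (a * sin t + b * cos t) * sin t = a"
    and "(a * cos t + b * sin t) * cos t - (- a * sin t + b * cos t) * sin t = a"
    and "(a * cos t + b * sin t) * sin t + (- a * sin t + b * cos t) * cos t = b"
  using sin_cos_squared_add[of t] by algebra+

lemma vec2_eq_iff: "(x::real^2) = y \<longleftrightarrow> x$1 = y$1 \<and> x$2 = y$2"
  by (simp add: vec_eq_iff forall_2)

lemma dir_nth [simp]: "dir t $ 1 = cos t" "dir t $ 2 = sin t"
  by (simp_all add: dir_def)

lemma inner_dir: "(x::real^2) \<bullet> dir t = x$1 * cos t + x$2 * sin t"
  by (simp add: inner_vec_def sum_2)

lemma inner_dir_self: "dir t \<bullet> dir t = 1"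
  by (simp add: inner_dir)

lemma norm_dir: "norm (dir t) = 1"
  by (simp add: norm_eq_sqrt_inner inner_dir_self)

lemma dir_periodic: "dir (t + 2*pi) = dir t"
  by (simp add: dir_def)

lemma periodic_value_in_period:
  fixes f :: "real \<Rightarrow> 'a"
  assumes "\<And>s. f (s + 2*pi) = f s"
  shows "\<exists>s'. 0 \<le> s' \<and> s' < 2*pi \<and> f s' = f s"
proof -
  interpret periodic_fun_simple f "2*pi" using assms by unfold_locales
  define k where "k = \<lfloor>s / (2*pi)\<rfloor>"
  have "of_int k \<le> s / (2*pi)" "s / (2*pi) < of_int k + 1"
    unfolding k_def by linarith+
  then have "0 \<le> s - of_int k * (2*pi)" "s - of_int k * (2*pi) < 2*pi"
    by (simp_all add: field_simps)
  then show ?thesis using minus_of_int[of s k] by blast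
qed

lemma periodic_attains_max:
  fixes m :: "real \<Rightarrow> real"
  assumes m: "continuous_on UNIV m" and periodic: "\<And>s. m (s + 2*pi) = m s"
  obtains t where "0 \<le> t" "t < 2*pi" "\<And>s. m s \<le> m t"
proof -
  have "\<exists>t0\<in>{0..2*pi}. \<forall>s\<in>{0..2*pi}. m s \<le> m t0"
    by (rule continuous_attains_sup[OF compact_Icc]) (auto intro: continuous_on_subset[OF m])
  then obtain t0 where "\<And>s. s \<in> {0..2*pi} \<Longrightarrow> m s \<le> m t0"
    by blast
  then have "m s \<le> m t0" for s
    using periodic_value_in_period[of m s, OF periodic] by force
  moreover obtain t where "0 \<le> t" "t < 2*pi" "m t = m t0"
    using periodic_value_in_period[of m t0, OF periodic] by blast
  ultimately show ?thesis using that by metis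
qed

lemma exists_inner_dir_pos:
  assumes "(y::real^2) \<noteq> 0"
  shows "\<exists>s. y \<bullet> dir s > 0"
proof -
  have "y$1 \<noteq> 0 \<or> y$2 \<noteq> 0" using assms by (auto simp: vec2_eq_iff)
  moreover have "y \<bullet> dir 0 = y$1" "y \<bullet> dir pi = - y$1" "y \<bullet> dir (pi/2) = y$2" "y \<bullet> dir (- (pi/2)) = - y$2"
    by (simp_all add: inner_dir)
  ultimately have "\<exists>s\<in>{0, pi, pi/2, - (pi/2)}. y \<bullet> dir s > 0"
    by auto
  then show ?thesis by blast
qed

lemma vec2_cbox_iff: "x \<in> cbox u v \<longleftrightarrow> u$1 \<le> x$1 \<and> x$1 \<le> v$1 \<and> u$2 \<le> x$2 \<and> x$2 \<le> v$2"
  for x u v :: "real^2"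
  by (auto simp: mem_box_cart forall_2)

lemma vec2_to_pair_image_cbox:
  "(\<lambda>x::real^2. (x$1, x$2)) ` cbox u v = cbox (u$1, u$2) (v$1, v$2)"
proof
  show "(\<lambda>x::real^2. (x$1, x$2)) ` cbox u v \<subseteq> cbox (u$1, u$2) (v$1, v$2)"
    by (auto simp: vec2_cbox_iff cbox_Pair_eq)
  show "cbox (u$1, u$2) (v$1, v$2) \<subseteq> (\<lambda>x::real^2. (x$1, x$2)) ` cbox u v"
  proof
    fix p assume "p \<in> cbox (u$1, u$2) (v$1, v$2)"
    then have "vector [fst p, snd p] \<in> cbox u v" "p = (\<lambda>x::real^2. (x$1, x$2)) (vector [fst p, snd p])"
      by (auto simp: vec2_cbox_iff cbox_Pair_eq mem_Times_iff)
    then show "p \<in> (\<lambda>x::real^2. (x$1, x$2)) ` cbox u v" by blast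
  qed
qed

lemma pair_to_vec2_image_cbox:
  "(\<lambda>p. vector [fst p, snd p] :: real^2) ` cbox (a1, a2) (b1, b2) = cbox (vector [a1, a2]) (vector [b1, b2])"
proof
  show "(\<lambda>p. vector [fst p, snd p] :: real^2) ` cbox (a1, a2) (b1, b2)
      \<subseteq> cbox (vector [a1, a2]) (vector [b1, b2])"
    by (auto simp: vec2_cbox_iff cbox_Pair_eq mem_Times_iff)
  show "cbox (vector [a1, a2]) (vector [b1, b2])
      \<subseteq> (\<lambda>p. vector [fst p, snd p] :: real^2) ` cbox (a1, a2) (b1, b2)"
  proof
    fix x :: "real^2" assume "x \<in> cbox (vector [a1, a2]) (vector [b1, b2])"
    then have "(x$1, x$2) \<in> cbox (a1, a2) (b1, b2)" "x = vector [fst (x$1, x$2), snd (x$1, x$2)]"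
      by (auto simp: vec2_cbox_iff cbox_Pair_eq mem_Times_iff vec2_eq_iff)
    then show "x \<in> (\<lambda>p. vector [fst p, snd p] :: real^2) ` cbox (a1, a2) (b1, b2)" by blast
  qed
qed

lemma has_integral_vec2_of_prod:
  fixes f :: "real \<times> real \<Rightarrow> real"
  assumes "(f has_integral I) (cbox (a1, a2) (b1, b2))"
  shows "((\<lambda>v::real^2. f (v$1, v$2)) has_integral I) (cbox (vector [a1, a2]) (vector [b1, b2]))"
proof -
  have empty_iff: "cbox u v = {} \<longleftrightarrow> v$1 < u$1 \<or> v$2 < u$2" for u v :: "real^2"
    using forall_2[of "\<lambda>i. \<not> v$i < u$i"] by (auto simp: interval_eq_empty_cart)
  have "((\<lambda>x. f (x$1, x$2)) has_integral (1 / 1) *\<^sub>R I)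
      ((\<lambda>p. vector [fst p, snd p] :: real^2) ` cbox (a1, a2) (b1, b2))"
  proof (rule has_integral_twiddle)
    show "measure lborel ((\<lambda>x::real^2. (x$1, x$2)) ` cbox u v) = 1 * measure lborel (cbox u v)" for u v
      unfolding vec2_to_pair_image_cbox content_Pair content_cbox_if_cart empty_iff by (auto simp: UNIV_2)
    show "\<exists>w z. (\<lambda>x::real^2. (x$1, x$2)) ` cbox u v = cbox w z" for u v
      using vec2_to_pair_image_cbox by blast
    show "\<exists>w z. (\<lambda>p. vector [fst p, snd p] :: real^2) ` cbox u v = cbox w z" for u v :: "real \<times> real"
      using pair_to_vec2_image_cbox[of "fst u" "snd u" "fst v" "snd v"] by auto
  qed (use assms in \<open>auto simp: vec2_eq_iff intro!: continuous_intros\<close>)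
  then show ?thesis by (simp add: pair_to_vec2_image_cbox)
qed

lemma has_integral_radial_density:
  fixes k :: "real \<Rightarrow> real"
  assumes k: "continuous_on UNIV k"
  shows "((\<lambda>v::real^2. v$1 * k (v$2)) has_integral (1/2 * period_integral k))
           (cbox (vector [0, 0]) (vector [1, 2*pi]))"
proof -
  define f where "f p = fst p * k (snd p)" for p :: "real \<times> real"
  have f: "continuous_on UNIV f"
    unfolding f_def using continuous_on_compose2[OF k continuous_on_snd[OF continuous_on_id]]
    by (auto intro!: continuous_intros)
  have "integral (cbox (0, 0) (1, 2*pi)) f
      = integral (cbox 0 1) (\<lambda>x. integral (cbox 0 (2*pi)) (\<lambda>y. f (x, y)))"
    using f by (intro integral_prod_continuous) (auto intro: continuous_on_subset)
  also have "\<dots> = integral {0..1} (\<lambda>x. x * period_integral k)"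
    by (simp add: f_def)
  also have "\<dots> = 1/2 * period_integral k"
    using has_integral_real_derivative[of 0 1 "\<lambda>x. x^2 / 2" "\<lambda>x. x"]
    by (auto intro!: derivative_eq_intros simp: integral_unique)
  finally have "(f has_integral (1/2 * period_integral k)) (cbox (0, 0) (1, 2*pi))"
    using f by (metis has_integral_integral integrable_continuous continuous_on_subset subset_UNIV)
  then show ?thesis
    using has_integral_vec2_of_prod[of f] by (simp add: f_def)
qed

definition polar_domain :: "(real^2) set" where
  "polar_domain = {v. 0 < v$1 \<and> v$1 \<le> 1 \<and> 0 \<le> v$2 \<and> v$2 < 2*pi}"

section \<open>Convex bodies of class K_+^2\<close>

locale Kplus2_body =
  fixes L :: "(real^2) set"
  assumes compact_L: "compact L" and convex_L: "convex L" and zero_in_interior: "0 \<in> interior L"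
    and C2_supp: "C2_circle (supp L)" and D2_supp_pos: "\<And>t. D2 (supp L) t > 0"
begin

abbreviation "h \<equiv> supp L"
abbreviation "h' \<equiv> deriv (supp L)"
abbreviation "h'' \<equiv> deriv (deriv (supp L))"

lemma supp_C2_periodic: "C2_periodic h h' h''"
  using C2_supp by (rule C2_circle_imp_C2_periodic)

lemma zero_in_L: "0 \<in> L"
  using zero_in_interior interior_subset by blast

lemma supp_upper: "x \<in> L \<Longrightarrow> x \<bullet> dir t \<le> h t"
  unfolding supp_def using compact_L
  by (intro cSup_upper bounded_imp_bdd_above compact_imp_bounded compact_continuous_image)
    (auto intro: continuous_intros)

lemma supp_attained: "\<exists>p\<in>L. p \<bullet> dir t = h t"
proof -
  have "\<exists>p\<in>L. \<forall>y\<in>L. y \<bullet> dir t \<le> p \<bullet> dir t"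
    using zero_in_L by (intro continuous_attains_sup[OF compact_L]) (auto intro: continuous_intros)
  then obtain p where p: "p \<in> L" "\<And>y. y \<in> L \<Longrightarrow> y \<bullet> dir t \<le> p \<bullet> dir t"
    by blast
  then have "h t = p \<bullet> dir t"
    unfolding supp_def by (intro cSup_eq_maximum) auto
  then show ?thesis using p by auto
qed

lemma supp_pos: "h t > 0"
proof -
  obtain e where e: "e > 0" "ball 0 e \<subseteq> L"
    using zero_in_interior mem_interior by blast
  moreover have "(e/2) *\<^sub>R dir t \<in> ball 0 e"
    using e by (simp add: norm_dir)
  ultimately have "(e/2) *\<^sub>R dir t \<in> L" by blast
  then have "((e/2) *\<^sub>R dir t) \<bullet> dir t \<le> h t" by (rule supp_upper)
  moreover have "((e/2) *\<^sub>R dir t) \<bullet> dir t = e/2"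
    by (simp add: inner_dir_self)
  ultimately show ?thesis using e by simp
qed

sublocale positive_support h h' h''
  using supp_C2_periodic supp_pos D2_supp_pos by unfold_locales

text \<open>The point h t dir t + h' t dir (t + pi/2) of the boundary with outer normal dir t.\<close>

definition boundary_point :: "real \<Rightarrow> real^2" where
  "boundary_point t = vector [h t * cos t - h' t * sin t, h t * sin t + h' t * cos t]"

lemma boundary_point_dir: "boundary_point t \<bullet> dir t = h t"
  by (simp add: boundary_point_def inner_dir rotation_inverse)

lemma boundary_point_periodic: "boundary_point (t + 2*pi) = boundary_point t"
  using C2_periodicD(1)[OF C2] C2_periodic_periodic(1)[OF C2] by (simp add: boundary_point_def)

lemma boundary_point_derivative:
  "((\<lambda>t. boundary_point t $ 1) has_real_derivative - D2 h t * sin t) (at t)"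
  "((\<lambda>t. boundary_point t $ 2) has_real_derivative D2 h t * cos t) (at t)"
  using C2_periodicD(2,3)[OF C2]
  by (auto intro!: derivative_eq_intros simp: boundary_point_def C2_periodic_D2[OF C2] algebra_simps)

text \<open>A point q of the supporting line in direction t is a minimum of h - q \<bullet> dir, so the
  derivative of that difference vanishes at t, which pins down q.\<close>

lemma supp_touching_point:
  assumes le: "\<And>s. q \<bullet> dir s \<le> h s" and eq: "q \<bullet> dir t = h t"
  shows "h' t = - q$1 * sin t + q$2 * cos t" "q = boundary_point t"
proof -
  have "((\<lambda>s. h s - q \<bullet> dir s) has_real_derivative h' t - (- q$1 * sin t + q$2 * cos t)) (at t)"
    using C2_periodicD(2)[OF C2] by (auto intro!: derivative_eq_intros simp: inner_dir)
  then have "h' t - (- q$1 * sin t + q$2 * cos t) = 0"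
    by (rule DERIV_local_min[OF _ zero_less_one]) (use le eq in auto)
  then show h': "h' t = - q$1 * sin t + q$2 * cos t" by simp
  have "h t = q$1 * cos t + q$2 * sin t"
    using eq by (simp add: inner_dir)
  then show "q = boundary_point t"
    unfolding boundary_point_def vec2_eq_iff h' vector_2 by (simp only: rotation_inverse)
qed

lemma boundary_point_in_L: "boundary_point t \<in> L"
proof -
  obtain p where "p \<in> L" "p \<bullet> dir t = h t" using supp_attained by blast
  moreover from \<open>p \<in> L\<close> have "p = boundary_point t"
    using \<open>p \<bullet> dir t = h t\<close> supp_upper by (intro supp_touching_point(2)) auto
  ultimately show ?thesis by simp
qed

lemma boundary_point_supp: "boundary_point t \<bullet> dir s \<le> h s"
  using boundary_point_in_L supp_upper by blast

text \<open>If two normal directions t1 < t2 < t1 + 2 pi had the same boundary point q, then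
  h - q \<bullet> dir, which satisfies (h - q \<bullet> dir)'' + (h - q \<bullet> dir) = D2 h > 0, would have double
  zeros at t1, t2 and t1 + 2 pi, but double zeros are more than pi apart.\<close>

lemma boundary_point_inj_on: "inj_on boundary_point {0..<2*pi}"
proof -
  have False if t: "0 \<le> t1" "t1 < t2" "t2 < 2*pi" and eq: "boundary_point t1 = boundary_point t2" for t1 t2
  proof -
    define q where "q = boundary_point t1"
    define \<phi> where "\<phi> s = h s - (q$1 * cos s + q$2 * sin s)" for s
    define \<phi>' where "\<phi>' s = h' s - (- q$1 * sin s + q$2 * cos s)" for s
    define \<phi>'' where "\<phi>'' s = h'' s + (q$1 * cos s + q$2 * sin s)" for s
    have \<phi>: "(\<phi> has_real_derivative \<phi>' s) (at s)" "(\<phi>' has_real_derivative \<phi>'' s) (at s)" for s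
      unfolding \<phi>_def \<phi>'_def \<phi>''_def using C2_periodicD(2,3)[OF C2]
      by (auto intro!: derivative_eq_intros simp: algebra_simps)
    have pos: "\<phi>'' s + \<phi> s > 0" for s
      using D2_pos[of s] by (simp add: \<phi>_def \<phi>''_def C2_periodic_D2[OF C2])
    have zero: "\<phi> s = 0" "\<phi>' s = 0" if "q \<bullet> dir s = h s" for s
      using that supp_touching_point(1)[OF boundary_point_supp[of t1, folded q_def] that]
      by (simp_all add: \<phi>_def \<phi>'_def inner_dir)
    have touch: "q \<bullet> dir t1 = h t1" "q \<bullet> dir t2 = h t2" "q \<bullet> dir (t1 + 2*pi) = h (t1 + 2*pi)"
      unfolding q_def eq boundary_point_dir
      using boundary_point_dir[of t1] boundary_point_periodic[of t1] C2_periodicD(1)[OF C2, of t1]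
        dir_periodic[of t1] by (simp_all add: eq)
    have "t1 + pi < t2"
      by (rule double_zeros_more_than_pi_apart[OF \<phi> pos]) (use t zero touch in auto)
    moreover have "t2 + pi < t1 + 2*pi"
      by (rule double_zeros_more_than_pi_apart[OF \<phi> pos]) (use t zero touch in auto)
    ultimately show False by simp
  qed
  then show ?thesis
    by (intro inj_onI) (metis atLeastLessThan_iff linorder_neqE_linordered_idom)
qed

definition polar :: "real^2 \<Rightarrow> real^2" where
  "polar v = v$1 *\<^sub>R boundary_point (v$2)"

lemma polar_inj_on: "inj_on polar polar_domain"
proof (rule inj_onI)
  fix v w assume v: "v \<in> polar_domain" and w: "w \<in> polar_domain" and eq: "polar v = polar w"
  have le: "r1 \<le> r2" if "r2 > 0" "r1 *\<^sub>R boundary_point t1 = r2 *\<^sub>R boundary_point t2" for r1 r2 t1 t2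
  proof -
    have "r1 * h t1 = r2 * (boundary_point t2 \<bullet> dir t1)"
      using arg_cong[OF that(2), of "\<lambda>x. x \<bullet> dir t1"] by (simp add: boundary_point_dir)
    also have "\<dots> \<le> r2 * h t1"
      using that(1) boundary_point_supp by (intro mult_left_mono) auto
    finally show ?thesis using pos[of t1] by simp
  qed
  have "v$1 = w$1"
    using le[of "w$1" "v$1" "v$2" "w$2"] le[of "v$1" "w$1" "w$2" "v$2"] v w eq
    by (force simp: polar_domain_def polar_def)
  moreover from this have "boundary_point (v$2) = boundary_point (w$2)"
    using eq v by (simp add: polar_def polar_domain_def)
  then have "v$2 = w$2"
    using boundary_point_inj_on v w by (auto simp: polar_domain_def inj_on_def)
  ultimately show "v = w" by (simp add: vec2_eq_iff)
qed

lemma polar_image_subset: "polar ` polar_domain \<subseteq> L - {0}"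
proof
  fix y assume "y \<in> polar ` polar_domain"
  then obtain v where v: "v \<in> polar_domain" "y = v$1 *\<^sub>R boundary_point (v$2)"
    by (auto simp: polar_def)
  have "v$1 *\<^sub>R boundary_point (v$2) + (1 - v$1) *\<^sub>R 0 \<in> L"
    using v by (intro convexD[OF convex_L boundary_point_in_L zero_in_L]) (auto simp: polar_domain_def)
  moreover have "boundary_point (v$2) \<noteq> 0"
    using boundary_point_dir[of "v$2"] pos[of "v$2"] by auto
  ultimately show "y \<in> L - {0}" using v by (auto simp: polar_domain_def)
qed

text \<open>A point y \<noteq> 0 of L is a multiple M of the boundary point in the direction t maximising
  y \<bullet> dir t / h t; the maximum M lies in (0, 1].\<close>

lemma polar_image_supset: "L - {0} \<subseteq> polar ` polar_domain"
proof
  fix y assume y: "y \<in> L - {0}"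
  define m where "m s = (y \<bullet> dir s) / h s" for s
  have "continuous_on UNIV m"
    unfolding m_def inner_dir using C2_periodic_continuous(1)[OF C2] pos
    by (auto intro!: continuous_intros simp: less_imp_neq[symmetric])
  moreover have "m (s + 2*pi) = m s" for s
    using C2_periodicD(1)[OF C2] by (simp add: m_def dir_periodic)
  ultimately obtain t where t: "0 \<le> t" "t < 2*pi" and m_le: "\<And>s. m s \<le> m t"
    by (rule periodic_attains_max) blast
  define M where "M = m t"
  obtain s where "y \<bullet> dir s > 0"
    using exists_inner_dir_pos y by blast
  then have "m s > 0"
    using pos[of s] by (simp add: m_def)
  then have M_pos: "M > 0"
    using m_le[of s] by (simp add: M_def)
  have "y \<bullet> dir s \<le> M * h s" for s
    using m_le[of s] pos[of s] by (simp add: m_def M_def field_simps)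
  then have "((1/M) *\<^sub>R y) \<bullet> dir s \<le> h s" for s
    using M_pos by (simp add: field_simps)
  moreover have "((1/M) *\<^sub>R y) \<bullet> dir t = h t"
    using M_pos pos[of t] by (auto simp: M_def m_def)
  ultimately have "(1/M) *\<^sub>R y = boundary_point t"
    by (rule supp_touching_point(2))
  then have "polar (vector [M, t]) = y"
    using M_pos by (simp add: polar_def flip: \<open>(1/M) *\<^sub>R y = boundary_point t\<close>)
  moreover have "M \<le> 1"
    using supp_upper[of y t] y pos[of t] by (simp add: M_def m_def)
  then have "vector [M, t] \<in> polar_domain"
    using M_pos t by (simp add: polar_domain_def)
  ultimately show "y \<in> polar ` polar_domain" by force
qed

definition polar_derivative :: "real^2 \<Rightarrow> real^2 \<Rightarrow> real^2" where
  "polar_derivative v w = vector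
     [w$1 * boundary_point (v$2) $ 1 - v$1 * w$2 * D2 h (v$2) * sin (v$2),
      w$1 * boundary_point (v$2) $ 2 + v$1 * w$2 * D2 h (v$2) * cos (v$2)]"

lemma polar_has_derivative: "(polar has_derivative polar_derivative v) (at v within S)"
proof -
  have nth: "((\<lambda>v::real^2. v$i) has_derivative (\<lambda>w. w$i)) (at v within S)" for i
    by (rule bounded_linear_imp_has_derivative[OF bounded_linear_vec_nth])
  have "((\<lambda>v. v$1 * boundary_point (v$2) $ i) has_derivative
      (\<lambda>w. v$1 * (w$2 * D) + w$1 * boundary_point (v$2) $ i)) (at v within S)"
    if "((\<lambda>t. boundary_point t $ i) has_real_derivative D) (at (v$2))" for i D
    using has_derivative_mult[OF nth DERIV_compose_FDERIV[OF that nth]] by simp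
  note coordinates = this[OF boundary_point_derivative(1)] this[OF boundary_point_derivative(2)]
  have "polar = (\<lambda>v. (v$1 * boundary_point (v$2) $ 1) *\<^sub>R vector [1, 0]
      + (v$1 * boundary_point (v$2) $ 2) *\<^sub>R vector [0, 1])"
    by (auto simp: polar_def vec2_eq_iff)
  moreover have "polar_derivative v = (\<lambda>w.
      (v$1 * (w$2 * - (D2 h (v$2) * sin (v$2))) + w$1 * boundary_point (v$2) $ 1) *\<^sub>R vector [1, 0]
      + (v$1 * (w$2 * (D2 h (v$2) * cos (v$2))) + w$1 * boundary_point (v$2) $ 2) *\<^sub>R vector [0, 1])"
    by (auto simp: polar_derivative_def vec2_eq_iff algebra_simps)
  ultimately show ?thesis
    using coordinates by (simp only:) (intro has_derivative_add has_derivative_scaleR_left; simp)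
qed

lemma det_polar_derivative: "det (matrix (polar_derivative v)) = v$1 * (h (v$2) * D2 h (v$2))"
proof -
  have "(axis 1 1 :: real^2) $ 1 = 1" "(axis 1 1 :: real^2) $ 2 = 0"
    "(axis 2 1 :: real^2) $ 1 = 0" "(axis 2 1 :: real^2) $ 2 = 1"
    by (simp_all add: axis_def)
  then have "det (matrix (polar_derivative v))
      = v$1 * D2 h (v$2) * (boundary_point (v$2) $ 1 * cos (v$2) + boundary_point (v$2) $ 2 * sin (v$2))"
    by (simp add: det_2 matrix_def polar_derivative_def algebra_simps)
  also have "boundary_point (v$2) $ 1 * cos (v$2) + boundary_point (v$2) $ 2 * sin (v$2) = h (v$2)"
    using boundary_point_dir[of "v$2"] by (simp add: inner_dir)
  finally show ?thesis by simp
qed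

lemma polar_domain_lebesgue: "polar_domain \<in> sets lebesgue"
proof -
  have nth: "continuous_on UNIV (\<lambda>v::real^2. v$i)" for i
    by (rule linear_continuous_on[OF bounded_linear_vec_nth])
  have eq: "polar_domain = {v. 0 < v$1} \<inter> {v. v$1 \<le> 1} \<inter> {v. 0 \<le> v$2} \<inter> {v::real^2. v$2 < 2*pi}"
    by (auto simp: polar_domain_def)
  have borel: "{v::real^2. 0 < v$1} \<in> sets borel" "{v::real^2. v$1 \<le> 1} \<in> sets borel"
    "{v::real^2. 0 \<le> v$2} \<in> sets borel" "{v::real^2. v$2 < 2*pi} \<in> sets borel"
    using open_Collect_less[OF continuous_on_const nth] closed_Collect_le[OF nth continuous_on_const]
      closed_Collect_le[OF continuous_on_const nth] open_Collect_less[OF nth continuous_on_const]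
    by (simp_all add: borel_open borel_closed)
  have "polar_domain \<in> sets borel"
    unfolding eq by (intro sets.Int borel)
  then show ?thesis by (simp add: sets_completionI_sets)
qed

lemma has_integral_det_polar_derivative:
  "((\<lambda>v. \<bar>det (matrix (polar_derivative v))\<bar>) has_integral area_form h h / 2) polar_domain"
proof -
  define B :: "(real^2) set" where "B = cbox (vector [0, 0]) (vector [1, 2*pi])"
  define J where "J v = v$1 * (h (v$2) * D2 h (v$2))" for v :: "real^2"
  have "continuous_on UNIV (\<lambda>t. h t * D2 h t)"
    using C2_periodic_continuous_D2[OF C2] C2_periodic_continuous(1)[OF C2] by (intro continuous_intros)
  then have "(J has_integral area_form h h / 2) B"
    unfolding J_def[abs_def] B_def area_form_def
    using has_integral_radial_density[of "\<lambda>t. h t * D2 h t"] by simp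
  moreover have "negligible {v::real^2. v$2 = 2*pi}"
    using negligible_standard_hyperplane[of "axis 2 (1::real)" "2*pi"] by (simp add: cart_eq_inner_axis)
  then have "negligible ({v::real^2. v$1 = 0} \<union> {v. v$2 = 2*pi})"
    by (intro negligible_Un negligible_standard_hyperplane_cart)
  then have "negligible {v \<in> B - polar_domain. J v \<noteq> 0}"
    by (rule negligible_subset) (auto simp: B_def polar_domain_def vec2_cbox_iff J_def)
  moreover have "{v \<in> polar_domain - B. J v \<noteq> 0} = {}"
    by (auto simp: B_def polar_domain_def vec2_cbox_iff)
  then have "negligible {v \<in> polar_domain - B. J v \<noteq> 0}"
    by (simp only: negligible_empty)
  ultimately have "(J has_integral area_form h h / 2) polar_domain"
    using has_integral_spike_set_eq by blast
  moreover have "J v = \<bar>det (matrix (polar_derivative v))\<bar>" if "v \<in> polar_domain" for v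
    using that pos[of "v$2"] D2_pos[of "v$2"]
    by (simp add: det_polar_derivative J_def polar_domain_def)
  ultimately show ?thesis
    by (rule has_integral_eq[rotated])
qed

lemma area_eq: "area L = area_form h h / 2"
proof -
  have "measure lebesgue (polar ` polar_domain) = area_form h h / 2"
    using has_measure_differentiable_image[OF polar_domain_lebesgue polar_has_derivative polar_inj_on]
      has_integral_det_polar_derivative by blast
  moreover have "polar ` polar_domain = L - {0}"
    using polar_image_subset polar_image_supset by blast
  moreover have "measure lebesgue (L - {0}) = measure lebesgue L"
    using lmeasurable_compact[OF compact_L] negligible_iff_null_sets negligible_sing
    by (intro measure_Diff_null_set) auto
  ultimately show ?thesis by (simp add: area_def)
qed

lemma dV_integral_eq: "dV_integral L z = area_form (\<lambda>t. z t * h t) h / 2"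
  unfolding dV_integral_def area_form_def by (simp add: algebra_simps)

lemma dV_integral_square: "dV_integral L (\<lambda>t. (z t)^2) = period_integral (\<lambda>t. (z t * h t)^2 * weight t) / 2"
  unfolding dV_integral_def weight_def using pos
  by (simp add: field_simps power2_eq_square less_imp_neq[symmetric])

lemma dV_integral_L_op:
  assumes "C2_periodic z z' z''"
  shows "dV_integral L (\<lambda>t. z t * - L_op L z t)
    = (period_integral (\<lambda>t. (z t * h t)^2 * weight t) - area_form (\<lambda>t. z t * h t) (\<lambda>t. z t * h t)) / 2"
proof -
  let ?f = "\<lambda>t. z t * h t"
  have f: "C2_periodic ?f (\<lambda>t. z' t * h t + z t * h' t) (\<lambda>t. z'' t * h t + 2 * z' t * h' t + z t * h'' t)"
    by (rule C2_periodic_mult[OF assms C2])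
  have "dV_integral L (\<lambda>t. z t * - L_op L z t)
      = period_integral (\<lambda>t. (?f t)^2 * weight t / 2 - ?f t * D2 ?f t / 2)"
    unfolding dV_integral_def L_op_def weight_def using pos D2_pos
    by (intro arg_cong[where f = period_integral] ext)
      (simp add: field_simps power2_eq_square less_imp_neq[symmetric])
  also have "\<dots> = (period_integral (\<lambda>t. (?f t)^2 * weight t) - area_form ?f ?f) / 2"
    unfolding area_form_def
    using C2_periodic_continuous(1)[OF f] C2_periodic_continuous_D2[OF f] continuous_weight
    by (simp add: period_integral_diff continuous_intros diff_divide_distrib)
  finally show ?thesis .
qed

lemma dV_integral_ell:
  assumes "continuous_on UNIV z"
  shows "dV_integral L (\<lambda>t. z t * ell L v t)
    = (v$1 * period_integral (\<lambda>t. z t * h t * cos t * weight t)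
        + v$2 * period_integral (\<lambda>t. z t * h t * sin t * weight t)) / 2"
proof -
  have "dV_integral L (\<lambda>t. z t * ell L v t)
      = period_integral (\<lambda>t. (v$1/2) * (z t * h t * cos t * weight t)
          + (v$2/2) * (z t * h t * sin t * weight t))"
    unfolding dV_integral_def ell_def weight_def using pos
    by (intro arg_cong[where f = period_integral] ext)
      (simp add: inner_commute[of "dir _"] inner_dir field_simps less_imp_neq[symmetric])
  also have "\<dots> = (v$1 * period_integral (\<lambda>t. z t * h t * cos t * weight t)
      + v$2 * period_integral (\<lambda>t. z t * h t * sin t * weight t)) / 2"
    using assms C2_periodic_continuous(1)[OF C2] continuous_weight
    by (simp add: period_integral_add continuous_intros add_divide_distrib)
  finally show ?thesis .
qed

lemma Rayleigh_quotient_nonneg: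
  assumes "C2_circle z" "dV_integral L z = 0"
  shows "0 \<le> dV_integral L (\<lambda>t. z t * - L_op L z t) / dV_integral L (\<lambda>t. (z t)^2)"
proof -
  note z = C2_circle_imp_C2_periodic[OF assms(1)]
  note f = C2_periodic_mult[OF z C2]
  have "area_form (\<lambda>t. z t * h t) h = 0" using assms(2) by (simp add: dV_integral_eq)
  then have "area_form (\<lambda>t. z t * h t) (\<lambda>t. z t * h t) \<le> 0"
    by (rule area_form_nonpos_if_orthogonal[OF C2 f integral_pos less_imp_le[OF area_form_pos]])
  moreover have "period_integral (\<lambda>t. (z t * h t)^2 * weight t) \<ge> 0"
    using C2_periodic_continuous(1)[OF z] C2_periodic_continuous(1)[OF C2] continuous_weight
      less_imp_le[OF weight_pos]
    by (intro period_integral_nonneg continuous_intros) auto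
  ultimately show ?thesis
    unfolding dV_integral_L_op[OF z] dV_integral_square by simp
qed

lemma lambda2_le_Rayleigh_quotient:
  assumes g: "C2_periodic g g' g''" and gh: "area_form g h = 0"
    and orth: "period_integral (\<lambda>t. g t * cos t * weight t) = 0"
      "period_integral (\<lambda>t. g t * sin t * weight t) = 0"
    and a: "period_integral (\<lambda>t. (g t)^2 * weight t) > 0"
  shows "lambda2 L * period_integral (\<lambda>t. (g t)^2 * weight t)
           \<le> period_integral (\<lambda>t. (g t)^2 * weight t) - area_form g g"
proof -
  define y where "y t = g t * (1 / h t)" for t
  have "h t \<noteq> 0" for t using pos[of t] by simp
  note y = C2_periodic_mult[OF g C2_periodic_inverse[OF C2 this], folded y_def]
  have yh: "y t * h t = g t" for t
    using pos[of t] by (simp add: y_def)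
  have "\<exists>t. y t \<noteq> 0"
  proof (rule ccontr)
    assume "\<not> ?thesis"
    then have "g t = 0" for t using yh[of t] by simp
    then show False using a by simp
  qed
  moreover have "dV_integral L y = 0"
    using gh by (simp add: dV_integral_eq yh)
  moreover have "dV_integral L (\<lambda>t. y t * ell L v t) = 0" for v
    using dV_integral_ell[OF C2_periodic_continuous(1)[OF y], of v] orth by (simp only: yh) simp
  ultimately have "dV_integral L (\<lambda>t. y t * - L_op L y t) / dV_integral L (\<lambda>t. (y t)^2)
      \<in> {dV_integral L (\<lambda>t. z t * - L_op L z t) / dV_integral L (\<lambda>t. (z t)^2) | z. C2_circle z \<and>
          (\<exists>t. z t \<noteq> 0) \<and> dV_integral L z = 0 \<and> (\<forall>v. dV_integral L (\<lambda>t. z t * ell L v t) = 0)}"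
    using C2_periodic_imp_C2_circle[OF y] by blast
  then have "lambda2 L \<le> dV_integral L (\<lambda>t. y t * - L_op L y t) / dV_integral L (\<lambda>t. (y t)^2)"
    unfolding lambda2_def using Rayleigh_quotient_nonneg
    by (intro cInf_lower) (auto intro: bdd_belowI[of _ 0])
  also have "\<dots> = ((period_integral (\<lambda>t. (g t)^2 * weight t) - area_form g g) / 2)
      / (period_integral (\<lambda>t. (g t)^2 * weight t) / 2)"
    unfolding dV_integral_L_op[OF y] dV_integral_square by (simp only: yh)
  finally show ?thesis using a by (simp add: field_simps)
qed

end

lemma Kplus2_iff: "Kplus2 K \<longleftrightarrow> Kplus2_body K"
  by (simp add: Kplus2_def Kplus2_body_def)

section \<open>Minkowski sums, mixed area and the main inequalities\<close>

lemma supp_set_plus: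
  assumes "Kplus2_body K" "Kplus2_body L"
  shows "supp (K + L) t = supp K t + supp L t"
proof -
  interpret K: Kplus2_body K by fact
  interpret L: Kplus2_body L by fact
  obtain p q where pq: "p \<in> K" "p \<bullet> dir t = supp K t" "q \<in> L" "q \<bullet> dir t = supp L t"
    using K.supp_attained L.supp_attained by blast
  show ?thesis
    unfolding supp_def[of "K + L"]
  proof (rule cSup_eq_maximum)
    show "supp K t + supp L t \<in> (\<lambda>x. x \<bullet> dir t) ` (K + L)"
      using pq by (auto simp: set_plus_def inner_add_left intro!: image_eqI[of _ _ "p + q"])
    show "x \<le> supp K t + supp L t" if "x \<in> (\<lambda>x. x \<bullet> dir t) ` (K + L)" for x
      using that K.supp_upper L.supp_upper by (auto simp: set_plus_def inner_add_left intro!: add_mono)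
  qed
qed

lemma Kplus2_body_set_plus:
  assumes "Kplus2_body K" "Kplus2_body L"
  shows "Kplus2_body (K + L)"
proof -
  interpret K: Kplus2_body K by fact
  interpret L: Kplus2_body L by fact
  have supp: "supp (K + L) = (\<lambda>t. supp K t + supp L t)"
    using supp_set_plus[OF assms] by auto
  have "K + L = {x + y | x y. x \<in> K \<and> y \<in> L}"
    by (auto simp: set_plus_def)
  then have "compact (K + L)"
    using compact_sums[OF K.compact_L L.compact_L] by simp
  moreover have "0 \<in> interior (K + L)"
    using interior_mono[of K "K + L"] K.zero_in_interior L.zero_in_L by (force simp: set_plus_def)
  moreover have "C2_periodic (supp (K + L)) (\<lambda>t. K.h' t + L.h' t) (\<lambda>t. K.h'' t + L.h'' t)"
    unfolding supp by (rule C2_periodic_add[OF K.C2 L.C2])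
  moreover have "D2 (supp (K + L)) t > 0" for t
    unfolding supp C2_periodic_D2_add[OF K.C2 L.C2] using K.D2_pos[of t] L.D2_pos[of t] by simp
  ultimately show ?thesis
    using convex_set_plus[OF K.convex_L L.convex_L]
    by unfold_locales (auto intro: C2_periodic_imp_C2_circle)
qed

lemma mixed_area_eq:
  assumes "Kplus2_body K" "Kplus2_body L"
  shows "mixed_area K L = area_form (supp L) (supp K) / 2"
proof -
  interpret K: Kplus2_body K by fact
  interpret L: Kplus2_body L by fact
  interpret KL: Kplus2_body "K + L" by (rule Kplus2_body_set_plus[OF assms])
  have "supp (K + L) = (\<lambda>t. 1 * supp K t + 1 * supp L t)"
    using supp_set_plus[OF assms] by auto
  then have "area (K + L) = (area_form (supp K) (supp K) + 2 * area_form (supp K) (supp L)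
      + area_form (supp L) (supp L)) / 2"
    using KL.area_eq area_form_linear_combination[OF K.C2 L.C2, of 1 1] by simp
  moreover have "{x + y | x y. x \<in> K \<and> y \<in> L} = K + L"
    by (auto simp: set_plus_def)
  ultimately show ?thesis
    unfolding mixed_area_def using K.area_eq L.area_eq area_form_sym[OF K.C2 L.C2] by simp
qed

lemma relative_curvature_inequality:
  assumes "Kplus2 K" "Kplus2 L"
  shows "(1/2) * bd_integral L (\<lambda>t. (1 / rel_curv L K t) * supp K t) - area L
           \<ge> lambda2 K * ((mixed_area K L)^2 / area K - area L)"
proof -
  interpret K: Kplus2_body K using assms(1) by (simp add: Kplus2_iff)
  interpret L: Kplus2_body L using assms(2) by (simp add: Kplus2_iff)
  define X where "X = (area_form L.h K.h)^2 / area_form K.h K.h - area_form L.h L.h"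
  define I where "I = period_integral (\<lambda>t. (D2 L.h t)^2 * K.h t / D2 K.h t)"
  have stability: "lambda2 K * X \<le> I - area_form L.h L.h"
    unfolding X_def I_def using K.lambda2_le_Rayleigh_quotient by (intro K.stability_estimate[OF L.C2])
  have bd: "bd_integral L (\<lambda>t. (1 / rel_curv L K t) * supp K t) = I"
    unfolding I_def bd_integral_def rel_curv_def curv_def by (simp add: power2_eq_square mult_ac)
  have bracket: "(mixed_area K L)^2 / area K - area L = X / 2"
    using mixed_area_eq K.Kplus2_body_axioms L.Kplus2_body_axioms K.area_form_pos
    by (simp add: X_def K.area_eq L.area_eq field_simps power2_eq_square)
  show ?thesis
    unfolding bd bracket using stability by (simp add: L.area_eq field_simps)
qed

lemma curvature_inequality:
  assumes "Kplus2 L"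
  shows "(1/2) * bd_integral L (\<lambda>t. 1 / curv L t) - area L \<ge> 4 * ((perimeter L)^2 / (4*pi) - area L)"
proof -
  interpret L: Kplus2_body L using assms by (simp add: Kplus2_iff)
  have D2_one: "D2 (\<lambda>t. 1) t = 1" for t
    by (simp add: D2_def)
  interpret unit_disc: positive_support "\<lambda>t. 1" "\<lambda>t. 0" "\<lambda>t. 0"
    using C2_periodic_const by unfold_locales (simp_all add: D2_one)
  have weight: "unit_disc.weight t = 1" for t
    by (simp add: unit_disc.weight_def D2_one)
  have "4 * ((area_form L.h (\<lambda>t. 1))^2 / area_form (\<lambda>t. 1) (\<lambda>t. 1) - area_form L.h L.h)
      \<le> period_integral (\<lambda>t. (D2 L.h t)^2 * 1 / D2 (\<lambda>t. 1) t) - area_form L.h L.h"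
  proof (rule unit_disc.stability_estimate[OF L.C2])
    fix g g' g'' assume g: "C2_periodic g g' g''" and "area_form g (\<lambda>t. 1) = 0"
      and "period_integral (\<lambda>t. g t * cos t * unit_disc.weight t) = 0"
      "period_integral (\<lambda>t. g t * sin t * unit_disc.weight t) = 0"
    then have "4 * period_integral (\<lambda>t. (g t)^2) \<le> period_integral (\<lambda>t. (g' t)^2)"
      by (intro Wirtinger_orthogonal_trig[OF g]) (simp_all add: area_form_def D2_one weight)
    then show "4 * period_integral (\<lambda>t. (g t)^2 * unit_disc.weight t)
        \<le> period_integral (\<lambda>t. (g t)^2 * unit_disc.weight t) - area_form g g"
      using area_form_self[OF g] by (simp add: weight)
  qed
  moreover have "perimeter L = area_form L.h (\<lambda>t. 1)"
    using area_form_sym[OF C2_periodic_const L.C2, of 1]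
    by (simp add: perimeter_def bd_integral_def area_form_def)
  moreover have "area_form (\<lambda>t. 1) (\<lambda>t. 1) = 2 * pi"
    by (simp add: area_form_def D2_one)
  moreover have "bd_integral L (\<lambda>t. 1 / curv L t) = period_integral (\<lambda>t. (D2 L.h t)^2)"
    unfolding bd_integral_def curv_def by (simp add: power2_eq_square)
  ultimately show ?thesis
    by (simp add: L.area_eq D2_one field_simps power2_eq_square)
qed

theorem theorem5p6:
  assumes "Kplus2 K" and "Kplus2 L"
  shows "(1/2) * bd_integral L (\<lambda>t. (1 / rel_curv L K t) * supp K t) - area L
           \<ge> lambda2 K * ((mixed_area K L)^2 / area K - area L)
         \<and> (1/2) * bd_integral L (\<lambda>t. 1 / curv L t) - area L
           \<ge> 4 * ((perimeter L)^2 / (4*pi) - area L)"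
  using relative_curvature_inequality[OF assms] curvature_inequality[OF assms(2)] ..

end
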